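(* Let $m\in\mathbb{N}$ and let $V_{n}(x)$, $n\in\mathbb{N}$, and $V(x)$ be 1-periodic complex-valued distributions in the Sobolev space $H_{+}^{-m}$ such that $V_{n}\to V$ in $H_{+}^{-m}$ as $n\to\infty$. Then the operators \[ S_{\pm}^{(n)}\equiv S_{\pm}(V_{n}):=D_{\pm}^{2m}\dotplus V_{n}(x),\qquad \mathrm{Dom}(S_{\pm}^{(n)})=\{u\in H_{\pm}^{m}\,|\,D_{\pm}^{2m}u+V_{n}(x)u\in L_{2}(0,1)\}, \] converge to the operators \[ S_{\pm}\equiv S_{\pm}(V)=D_{\pm}^{2m}\dotplus V(x),\qquad \mathrm{Dom}(S_{\pm})=\{u\in H_{\pm}^{m}\,|\,D_{\pm}^{2m}u+V(x)u\in L_{2}(0,1)\}, \] in the generalized convergence sense for closed operators (convergence in the gap metric between closed operators, as in Kato's Perturbation Theory for Linear Operators).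
   Context: Work in the Hilbert space $L_{2}(0,1)$. For $s\in\mathbb{R}$, $H_{+}^{s}$ (resp. $H_{-}^{s}$) is the Sobolev space of 1-periodic (resp. 1-semiperiodic) functions/distributions $f=\sum_{k\in\mathbb{Z}}\widehat f(2k)e^{i2k\pi x}$ (resp. $f=\sum_{k}\widehat f(2k+1)e^{i(2k+1)\pi x}$) with norm $\big(\sum_k\langle 2k\rangle^{2s}|\widehat f(2k)|^2\big)^{1/2}$ (resp. $\big(\sum_k\langle 2k+1\rangle^{2s}|\widehat f(2k+1)|^2\big)^{1/2}$), $\langle k\rangle=1+|k|$. $D_{\pm}=-i\,d/dx$ with domain $H_{\pm}^{1}$, $D_{\pm}^{2m}:=|D_{\pm}|^{2m}$ with domain $H_{\pm}^{2m}$. $\langle\cdot,\cdot\rangle_{\pm}$ is the pairing between $H_{\pm}^{s}$ and $H_{\pm}^{-s}$ extending the $L_2(0,1)$ inner product. For $V\in H_{+}^{-m}$ the form-sum $S_{\pm}(V)=D_{\pm}^{2m}\dotplus V(x)$ is the m-sectorial operator associated (first representation theorem) with the closed densely defined sectorial form $t_{\pm}[u,v]=\langle D_{\pm}^{2m}u,v\rangle_{\pm}+\langle V(x)u,v\rangle_{\pm}$, $\mathrm{Dom}(t_{\pm})=H_{\pm}^{m}$; here $V(x)u$ is the formal product of Fourier series, which converges in $H_{\pm}^{-m}$ for $u\in H_{\pm}^{m}$ by the convolution lemma. *)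

theory Defs
  imports "HOL-Analysis.Analysis"
begin

text \<open>
  A function/distribution
  on (0,1) is represented by its coefficient sequence f :: int => complex,
  where f n is the coefficient of exp(i n pi x).  1-periodic objects have
  coefficients supported on even n, 1-semiperiodic ones on odd n.
  The parity flag pl = True stands for the sign +, pl = False for -.
  L_2(0,1) is identified (unitarily, via the orthonormal basis
  exp(i n pi x), n even resp. n odd) with H^0_+ resp. H^0_-.
\<close>

definition bracket :: "int \<Rightarrow> real" where
  "bracket n = 1 + real_of_int \<bar>n\<bar>"

definition parity_ok :: "bool \<Rightarrow> int \<Rightarrow> bool" where
  "parity_ok pl n = (if pl then even n else odd n)"

definition sobolev :: "bool \<Rightarrow> real \<Rightarrow> (int \<Rightarrow> complex) set" where
  "sobolev pl s = {f. (\<forall>n. f n \<noteq> 0 \<longrightarrow> parity_ok pl n) \<and>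
       (\<lambda>n. bracket n powr (2 * s) * (cmod (f n))\<^sup>2) summable_on UNIV}"

definition sob_norm :: "real \<Rightarrow> (int \<Rightarrow> complex) \<Rightarrow> real" where
  "sob_norm s f = sqrt (\<Sum>\<^sub>\<infinity>n. bracket n powr (2 * s) * (cmod (f n))\<^sup>2)"

text \<open>D^{2m} = |D|^{2m}, D = -i d/dx: multiplies the coefficient of
  exp(i n pi x) by |n pi|^{2m}.\<close>
definition Dpow :: "nat \<Rightarrow> (int \<Rightarrow> complex) \<Rightarrow> (int \<Rightarrow> complex)" where
  "Dpow m u = (\<lambda>n. complex_of_real ((pi * real_of_int \<bar>n\<bar>) ^ (2 * m)) * u n)"

text \<open>Formal product V(x)u of Fourier series (convolution of coefficients).\<close>
definition fmult :: "(int \<Rightarrow> complex) \<Rightarrow> (int \<Rightarrow> complex) \<Rightarrow> (int \<Rightarrow> complex)" where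
  "fmult V u = (\<lambda>n. \<Sum>\<^sub>\<infinity>l. V (n - l) * u l)"

definition S_dom :: "bool \<Rightarrow> nat \<Rightarrow> (int \<Rightarrow> complex) \<Rightarrow> (int \<Rightarrow> complex) set" where
  "S_dom pl m V = {u \<in> sobolev pl (real m).
       (\<lambda>n. Dpow m u n + fmult V u n) \<in> sobolev pl 0}"

definition S_graph :: "bool \<Rightarrow> nat \<Rightarrow> (int \<Rightarrow> complex)
      \<Rightarrow> ((int \<Rightarrow> complex) \<times> (int \<Rightarrow> complex)) set" where
  "S_graph pl m V = {(u, (\<lambda>n. Dpow m u n + fmult V u n)) | u. u \<in> S_dom pl m V}"

definition l2sq :: "(int \<Rightarrow> complex) \<Rightarrow> real" where
  "l2sq f = (\<Sum>\<^sub>\<infinity>n. (cmod (f n))\<^sup>2)"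

definition pnorm :: "(int \<Rightarrow> complex) \<times> (int \<Rightarrow> complex) \<Rightarrow> real" where
  "pnorm x = sqrt (l2sq (fst x) + l2sq (snd x))"

definition pdiff :: "(int \<Rightarrow> complex) \<times> (int \<Rightarrow> complex)
     \<Rightarrow> (int \<Rightarrow> complex) \<times> (int \<Rightarrow> complex) \<Rightarrow> (int \<Rightarrow> complex) \<times> (int \<Rightarrow> complex)" where
  "pdiff x y = ((\<lambda>n. fst x n - fst y n), (\<lambda>n. snd x n - snd y n))"

definition dist_to :: "(int \<Rightarrow> complex) \<times> (int \<Rightarrow> complex)
     \<Rightarrow> ((int \<Rightarrow> complex) \<times> (int \<Rightarrow> complex)) set \<Rightarrow> real" where
  "dist_to x N = Inf {pnorm (pdiff x y) | y. y \<in> N}"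

text \<open>Kato's delta(M,N) (with delta(0,N) = 0) and the gap delta-hat.\<close>
definition gap_dir :: "((int \<Rightarrow> complex) \<times> (int \<Rightarrow> complex)) set
     \<Rightarrow> ((int \<Rightarrow> complex) \<times> (int \<Rightarrow> complex)) set \<Rightarrow> real" where
  "gap_dir M N = Sup (insert 0 {dist_to x N | x. x \<in> M \<and> pnorm x = 1})"

definition gap :: "((int \<Rightarrow> complex) \<times> (int \<Rightarrow> complex)) set
     \<Rightarrow> ((int \<Rightarrow> complex) \<times> (int \<Rightarrow> complex)) set \<Rightarrow> real" where
  "gap M N = max (gap_dir M N) (gap_dir N M)"

end

theory Submission
  imports Defs
begin

text \<open>
  On Fourier coefficients let \<open>\<rho>(n) = (\<pi>|n|)\<^sup>2\<^sup>m + \<mu>\<close> be the symbol of \<open>D\<^sup>2\<^sup>m + \<mu>\<close>. Then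
  \<open>S(V) + \<mu> = \<rho>\<^sup>1\<^sup>/\<^sup>2 (I + K\<^sub>V) \<rho>\<^sup>1\<^sup>/\<^sup>2\<close> with \<open>K\<^sub>V = \<rho>\<^sup>-\<^sup>1\<^sup>/\<^sup>2 V \<rho>\<^sup>-\<^sup>1\<^sup>/\<^sup>2\<close>. By Peetre's inequality
  \<open>\<langle>n - l\<rangle> \<le> \<langle>n\<rangle>\<langle>l\<rangle>\<close> the squared Hilbert--Schmidt norm of \<open>K\<^sub>V\<close> is at most a constant times
  \<open>(\<Sum>\<^sub>n 1/\<rho>(n)) \<parallel>V\<parallel>\<^sup>2\<^sub>-\<^sub>m\<close>, and \<open>\<Sum>\<^sub>n 1/\<rho>(n) = O(\<mu>\<^sup>-\<^sup>1\<^sup>/\<^sup>2)\<close>. So one large shift \<open>\<mu>\<close> makes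
  \<open>\<parallel>K\<^sub>W\<parallel> \<le> 1/2\<close> for all potentials \<open>W\<close> near \<open>V\<close>, and \<open>I + K\<^sub>W\<close> is inverted by a Neumann series.
  For a unit vector \<open>(u, S(V\<^sub>1)u)\<close> of one graph, the solution \<open>w\<close> of \<open>(S(V\<^sub>2) + \<mu>)w = (S(V\<^sub>1) + \<mu>)u\<close>
  gives the point \<open>(w, S(V\<^sub>2)w)\<close> of the other graph at distance \<open>O(\<parallel>V\<^sub>1 - V\<^sub>2\<parallel>\<^sub>-\<^sub>m)\<close>, since
  \<open>\<rho>\<^sup>1\<^sup>/\<^sup>2(u - w)\<close> solves \<open>(I + K\<^sub>V\<^sub>2) h = K\<^sub>V\<^sub>2\<^sub>-\<^sub>V\<^sub>1 \<rho>\<^sup>1\<^sup>/\<^sup>2 u\<close>. Hence the gap is locally Lipschitz in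
  the potential.
\<close>

lemma divide_le_self: "0 \<le> x \<Longrightarrow> 1 \<le> c \<Longrightarrow> x / c \<le> (x::real)"
  by (simp add: divide_le_eq mult_le_cancel_left1)

lemma nonneg_summable_on_infsum_le:
  fixes f :: "'a \<Rightarrow> real"
  assumes "\<And>x. f x \<ge> 0" and "\<And>F. finite F \<Longrightarrow> sum f F \<le> B"
  shows "f summable_on UNIV" and "infsum f UNIV \<le> B"
proof -
  show s: "f summable_on UNIV"
    by (rule nonneg_bdd_above_summable_on) (use assms in \<open>auto intro!: bdd_aboveI2\<close>)
  show "infsum f UNIV \<le> B"
    by (rule infsum_le_finite_sums[OF s]) (use assms in auto)
qed

lemma infsum_diff:
  fixes f g :: "'a \<Rightarrow> 'b::{topological_ab_group_add,t2_space}"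
  assumes "f summable_on A" and "g summable_on A"
  shows "infsum (\<lambda>x. f x - g x) A = infsum f A - infsum g A"
  using infsum_add[OF assms(1) summable_on_uminus[THEN iffD2, OF assms(2)]]
  by (simp add: infsum_uminus)

lemma summable_on_sum:
  fixes f :: "'i \<Rightarrow> 'a \<Rightarrow> 'b::topological_comm_monoid_add"
  assumes "finite I" and "\<And>i. i \<in> I \<Longrightarrow> f i summable_on A"
  shows "(\<lambda>x. \<Sum>i\<in>I. f i x) summable_on A"
  using assms by (induction I rule: finite_induct) (auto intro!: summable_on_add)

lemma infsum_sum:
  fixes f :: "'i \<Rightarrow> 'a \<Rightarrow> 'b::{topological_comm_monoid_add,t2_space}"
  assumes "finite I" and "\<And>i. i \<in> I \<Longrightarrow> f i summable_on A"
  shows "infsum (\<lambda>x. \<Sum>i\<in>I. f i x) A = (\<Sum>i\<in>I. infsum (f i) A)"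
  using assms by (induction I rule: finite_induct) (auto simp: infsum_add summable_on_sum)

lemma summable_on_le_double_add: "p summable_on A \<Longrightarrow> q summable_on A \<Longrightarrow>
    (\<And>x. 0 \<le> r x) \<Longrightarrow> (\<And>x. r x \<le> 2 * p x + 2 * q x) \<Longrightarrow> r summable_on A"
  and infsum_le_double_add: "p summable_on A \<Longrightarrow> q summable_on A \<Longrightarrow>
    (\<And>x. 0 \<le> r x) \<Longrightarrow> (\<And>x. r x \<le> 2 * p x + 2 * q x) \<Longrightarrow>
    infsum r A \<le> 2 * infsum p A + 2 * infsum q A"
  for p q r :: "'a \<Rightarrow> real"
proof -
  assume p: "p summable_on A" and q: "q summable_on A"
    and r: "\<And>x. 0 \<le> r x" "\<And>x. r x \<le> 2 * p x + 2 * q x"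
  have pq: "(\<lambda>x. 2 * p x + 2 * q x) summable_on A"
    using p q by (intro summable_on_add summable_on_cmult_right)
  show rs: "r summable_on A"
    using r by (intro summable_on_comparison_test[OF pq]) auto
  have "infsum r A \<le> infsum (\<lambda>x. 2 * p x + 2 * q x) A"
    using rs pq r(2) by (rule infsum_mono)
  also have "\<dots> = 2 * infsum p A + 2 * infsum q A"
    using p q by (simp add: infsum_add summable_on_cmult_right infsum_cmult_right')
  finally show "infsum r A \<le> 2 * infsum p A + 2 * infsum q A" .
qed

lemma infsum_mult_le_sqrt:
  fixes a b :: "'a \<Rightarrow> real"
  assumes "\<And>x. a x \<ge> 0" and "\<And>x. b x \<ge> 0"
    and "(\<lambda>x. (a x)\<^sup>2) summable_on UNIV" and "(\<lambda>x. (b x)\<^sup>2) summable_on UNIV"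
  shows "(\<lambda>x. a x * b x) summable_on UNIV"
    and "(\<Sum>\<^sub>\<infinity>x. a x * b x) \<le> sqrt (\<Sum>\<^sub>\<infinity>x. (a x)\<^sup>2) * sqrt (\<Sum>\<^sub>\<infinity>x. (b x)\<^sup>2)"
proof -
  have "sum (\<lambda>x. a x * b x) F \<le> sqrt (\<Sum>\<^sub>\<infinity>x. (a x)\<^sup>2) * sqrt (\<Sum>\<^sub>\<infinity>x. (b x)\<^sup>2)"
    if "finite F" for F
  proof -
    have "sum (\<lambda>x. a x * b x) F \<le> L2_set a F * L2_set b F"
      using L2_set_mult_ineq[of a b F] assms(1,2) by simp
    also have "\<dots> \<le> sqrt (\<Sum>\<^sub>\<infinity>x. (a x)\<^sup>2) * sqrt (\<Sum>\<^sub>\<infinity>x. (b x)\<^sup>2)"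
      unfolding L2_set_def
      by (intro mult_mono real_sqrt_le_mono finite_sum_le_infsum assms that)
         (auto intro!: sum_nonneg infsum_nonneg)
    finally show ?thesis .
  qed
  then show "(\<lambda>x. a x * b x) summable_on UNIV"
    and "(\<Sum>\<^sub>\<infinity>x. a x * b x) \<le> sqrt (\<Sum>\<^sub>\<infinity>x. (a x)\<^sup>2) * sqrt (\<Sum>\<^sub>\<infinity>x. (b x)\<^sup>2)"
    using nonneg_summable_on_infsum_le[of "\<lambda>x. a x * b x"] assms by auto
qed

lemma infsum_reflect: "(\<Sum>\<^sub>\<infinity>l. g ((n::int) - l)) = infsum g UNIV"
  and summable_on_reflect: "(\<lambda>l. g ((n::int) - l)) summable_on UNIV \<longleftrightarrow> g summable_on UNIV"
proof -
  have bij: "bij_betw (\<lambda>l::int. n - l) UNIV UNIV"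
    by (rule bij_betw_byWitness[where f'="\<lambda>l. n - l"]) auto
  show "(\<Sum>\<^sub>\<infinity>l. g (n - l)) = infsum g UNIV"
    using infsum_reindex_bij_betw[OF bij] .
  show "(\<lambda>l. g (n - l)) summable_on UNIV \<longleftrightarrow> g summable_on UNIV"
    using summable_on_reindex_bij_betw[OF bij] .
qed

lemma sum_infsum_convolution_le:
  fixes w r :: "int \<Rightarrow> real"
  assumes w: "w summable_on UNIV" "\<And>k. w k \<ge> 0" and r: "r summable_on UNIV" "\<And>k. r k \<ge> 0"
    and "finite F"
  shows "(\<Sum>n\<in>F. \<Sum>\<^sub>\<infinity>k. w k * r (n - k)) \<le> infsum w UNIV * infsum r UNIV"
proof -
  have shifted_sum_le: "(\<Sum>n\<in>F. r (n - k)) \<le> infsum r UNIV" for k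
  proof -
    have "(\<Sum>n\<in>F. r (n - k)) = (\<Sum>j\<in>(\<lambda>n. n - k) ` F. r j)"
      by (subst sum.reindex) (auto simp: inj_on_def)
    also have "\<dots> \<le> infsum r UNIV"
      using r assms(5) by (intro finite_sum_le_infsum) auto
    finally show ?thesis .
  qed
  have r_le: "r j \<le> infsum r UNIV" for j
    using finite_sum_le_infsum[OF r(1), of "{j}"] r(2) by simp
  have summable: "(\<lambda>k. w k * r (n - k)) summable_on UNIV" for n
    using w r r_le by (intro summable_on_comparison_test[OF summable_on_cmult_left[OF w(1)]]
        mult_left_mono) auto
  have "(\<Sum>n\<in>F. \<Sum>\<^sub>\<infinity>k. w k * r (n - k)) = (\<Sum>\<^sub>\<infinity>k. w k * (\<Sum>n\<in>F. r (n - k)))"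
    by (simp add: infsum_sum[OF assms(5) summable, symmetric] sum_distrib_left)
  also have "\<dots> \<le> (\<Sum>\<^sub>\<infinity>k. w k * infsum r UNIV)"
    using w shifted_sum_le summable_on_sum[OF assms(5) summable]
    by (intro infsum_mono summable_on_cmult_left mult_left_mono) (auto simp: sum_distrib_left)
  also have "\<dots> = infsum w UNIV * infsum r UNIV"
    by (rule infsum_cmult_left')
  finally show ?thesis .
qed

definition l2 :: "(int \<Rightarrow> complex) \<Rightarrow> bool" where
  "l2 f \<longleftrightarrow> (\<lambda>n. (cmod (f n))\<^sup>2) summable_on UNIV"

lemma l2sq_nonneg: "l2sq f \<ge> 0"
  unfolding l2sq_def by (rule infsum_nonneg) simp

lemma l2_uminus: "l2 (\<lambda>n. - f n) \<longleftrightarrow> l2 f" and l2sq_uminus: "l2sq (\<lambda>n. - f n) = l2sq f"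
  by (simp_all add: l2_def l2sq_def)

lemma l2_cmult: "l2 f \<Longrightarrow> l2 (\<lambda>n. c * f n)"
  and l2sq_cmult: "l2sq (\<lambda>n. c * f n) = (cmod c)\<^sup>2 * l2sq f"
  by (auto simp: l2_def l2sq_def norm_mult power_mult_distrib
      intro: summable_on_cmult_right infsum_cmult_right')

lemma norm_add_sq_le: "(cmod (a + b))\<^sup>2 \<le> 2 * (cmod a)\<^sup>2 + 2 * (cmod b)\<^sup>2"
proof -
  have "(cmod (a + b))\<^sup>2 \<le> (cmod a + cmod b)\<^sup>2"
    by (intro power_mono norm_triangle_ineq) auto
  also have "\<dots> \<le> 2 * (cmod a)\<^sup>2 + 2 * (cmod b)\<^sup>2"
    using sum_squares_bound[of "cmod a" "cmod b"] by (simp add: power2_eq_square algebra_simps)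
  finally show ?thesis .
qed

lemma l2_add: "l2 f \<Longrightarrow> l2 g \<Longrightarrow> l2 (\<lambda>n. f n + g n)"
  and l2sq_add_le: "l2 f \<Longrightarrow> l2 g \<Longrightarrow> l2sq (\<lambda>n. f n + g n) \<le> 2 * l2sq f + 2 * l2sq g"
  using summable_on_le_double_add[of "\<lambda>n. (cmod (f n))\<^sup>2" UNIV "\<lambda>n. (cmod (g n))\<^sup>2"]
    infsum_le_double_add[of "\<lambda>n. (cmod (f n))\<^sup>2" UNIV "\<lambda>n. (cmod (g n))\<^sup>2"]
  unfolding l2_def l2sq_def by (auto simp: norm_add_sq_le)

lemma l2_diff: "l2 f \<Longrightarrow> l2 g \<Longrightarrow> l2 (\<lambda>n. f n - g n)"
  and l2sq_diff_le: "l2 f \<Longrightarrow> l2 g \<Longrightarrow> l2sq (\<lambda>n. f n - g n) \<le> 2 * l2sq f + 2 * l2sq g"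
  using l2_add[of f "\<lambda>n. - g n"] l2sq_add_le[of f "\<lambda>n. - g n"] by (simp_all add: l2_uminus l2sq_uminus)

lemma l2_sum: "finite J \<Longrightarrow> (\<And>j. j \<in> J \<Longrightarrow> l2 (d j)) \<Longrightarrow> l2 (\<lambda>n. \<Sum>j\<in>J. d j n)"
  by (induction J rule: finite_induct) (auto simp: l2_def intro: l2_add[unfolded l2_def])

lemma norm_sq_le_l2sq: "l2 f \<Longrightarrow> (cmod (f n))\<^sup>2 \<le> l2sq f"
  unfolding l2sq_def l2_def using finite_sum_le_infsum[of "\<lambda>n. (cmod (f n))\<^sup>2" UNIV "{n}"] by simp

lemma l2sq_sum_le_weighted:
  assumes "finite A" and "\<And>j. j \<in> A \<Longrightarrow> l2 (d j)" and "\<And>j. j \<in> A \<Longrightarrow> w j > (0::real)"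
  shows "l2sq (\<lambda>n. \<Sum>j\<in>A. d j n) \<le> (\<Sum>j\<in>A. w j) * (\<Sum>j\<in>A. l2sq (d j) / w j)"
proof -
  have pointwise: "(cmod (\<Sum>j\<in>A. d j n))\<^sup>2 \<le> (\<Sum>j\<in>A. w j) * (\<Sum>j\<in>A. (cmod (d j n))\<^sup>2 / w j)" for n
  proof -
    have "(\<Sum>j\<in>A. sqrt (w j) * (cmod (d j n) / sqrt (w j))) = (\<Sum>j\<in>A. cmod (d j n))"
      using assms(3) by (intro sum.cong) (auto simp: less_imp_neq[symmetric])
    then have "cmod (\<Sum>j\<in>A. d j n) \<le> (\<Sum>j\<in>A. sqrt (w j) * (cmod (d j n) / sqrt (w j)))"
      by (simp add: norm_sum)
    then have "(cmod (\<Sum>j\<in>A. d j n))\<^sup>2 \<le> (\<Sum>j\<in>A. sqrt (w j) * (cmod (d j n) / sqrt (w j)))\<^sup>2"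
      by (intro power_mono) auto
    also have "\<dots> \<le> (\<Sum>j\<in>A. (sqrt (w j))\<^sup>2) * (\<Sum>j\<in>A. (cmod (d j n) / sqrt (w j))\<^sup>2)"
      by (rule Cauchy_Schwarz_ineq_sum)
    also have "\<dots> = (\<Sum>j\<in>A. w j) * (\<Sum>j\<in>A. (cmod (d j n))\<^sup>2 / w j)"
      using assms(3) by (intro arg_cong2[where f="(*)"] sum.cong) (auto simp: power_divide less_imp_le)
    finally show ?thesis .
  qed
  have sj: "(\<lambda>n. (cmod (d j n))\<^sup>2 / w j) summable_on UNIV" if "j \<in> A" for j
    using summable_on_cmult_left[OF assms(2)[OF that, unfolded l2_def], of "1 / w j"] by simp
  have "l2sq (\<lambda>n. \<Sum>j\<in>A. d j n) \<le> (\<Sum>\<^sub>\<infinity>n. (\<Sum>j\<in>A. w j) * (\<Sum>j\<in>A. (cmod (d j n))\<^sup>2 / w j))"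
    unfolding l2sq_def using l2_sum[of A d] assms(1,2) pointwise
    by (intro infsum_mono summable_on_cmult_right summable_on_sum sj) (auto simp: l2_def)
  also have "\<dots> = (\<Sum>j\<in>A. w j) * (\<Sum>j\<in>A. \<Sum>\<^sub>\<infinity>n. (cmod (d j n))\<^sup>2 / w j)"
    by (simp add: infsum_cmult_right' infsum_sum[OF assms(1) sj])
  also have "\<dots> = (\<Sum>j\<in>A. w j) * (\<Sum>j\<in>A. l2sq (d j) / w j)"
    unfolding l2sq_def by (simp add: infsum_cmult_left' divide_inverse)
  finally show ?thesis .
qed

lemma l2_pointwise_limit:
  assumes "\<And>n. (\<lambda>K. f K n) \<longlonglongrightarrow> F n" and "\<And>K. l2 (f K)" and "\<And>K. l2sq (f K) \<le> B"
  shows "l2 F" and "l2sq F \<le> B"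
proof -
  have "(\<Sum>n\<in>A. (cmod (F n))\<^sup>2) \<le> B" if "finite A" for A
  proof (rule LIMSEQ_le_const2)
    show "(\<lambda>K. \<Sum>n\<in>A. (cmod (f K n))\<^sup>2) \<longlonglongrightarrow> (\<Sum>n\<in>A. (cmod (F n))\<^sup>2)"
      by (intro tendsto_intros assms(1))
    have "(\<Sum>n\<in>A. (cmod (f K n))\<^sup>2) \<le> l2sq (f K)" for K
      unfolding l2sq_def using assms(2)[of K] that by (intro finite_sum_le_infsum) (auto simp: l2_def)
    then show "\<exists>N. \<forall>K\<ge>N. (\<Sum>n\<in>A. (cmod (f K n))\<^sup>2) \<le> B"
      using assms(3) order_trans by blast
  qed
  then show "l2 F" and "l2sq F \<le> B"
    using nonneg_summable_on_infsum_le[of "\<lambda>n. (cmod (F n))\<^sup>2"] unfolding l2_def l2sq_def by auto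
qed

definition rho :: "nat \<Rightarrow> real \<Rightarrow> int \<Rightarrow> real" where
  "rho m \<mu> n = (pi * real_of_int \<bar>n\<bar>) ^ (2 * m) + \<mu>"

lemma bracket_pos: "bracket n > 0" and bracket_ge_1: "bracket n \<ge> 1"
  by (auto simp: bracket_def)

lemma bracket_neq_0: "bracket n \<noteq> 0"
  using bracket_pos[of n] by simp

lemma bracket_minus_commute: "bracket (n - l) = bracket (l - n)"
  by (simp add: bracket_def abs_minus_commute)

lemma rho_ge: "rho m \<mu> n \<ge> \<mu>"
  by (simp add: rho_def)

lemma rho_ge_1: "\<mu> \<ge> 1 \<Longrightarrow> rho m \<mu> n \<ge> 1"
  using rho_ge[of \<mu> m n] by linarith

lemma rho_pos: "\<mu> \<ge> 1 \<Longrightarrow> rho m \<mu> n > 0"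
  using rho_ge_1[of \<mu> m n] by linarith

lemma rho_neq_0: "\<mu> \<ge> 1 \<Longrightarrow> rho m \<mu> n \<noteq> 0"
  using rho_pos[of \<mu> m n] by simp

lemma Dpow_add_eq_rho: "Dpow m u n + of_real \<mu> * u n = of_real (rho m \<mu> n) * u n"
  unfolding Dpow_def rho_def by (simp add: algebra_simps)

lemma one_plus_pow_le:
  fixes x :: real
  assumes "x \<ge> 0"
  shows "(1 + x) ^ (2 * m) \<le> 4 ^ m * (x ^ (2 * m) + 1)"
proof -
  have "(1 + x) ^ (2 * m) \<le> (2 * max 1 x) ^ (2 * m)"
    by (rule power_mono) (use assms in auto)
  also have "\<dots> = 4 ^ m * max 1 x ^ (2 * m)"
    by (simp add: power_mult_distrib power_mult)
  also have "max 1 x ^ (2 * m) \<le> x ^ (2 * m) + 1"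
    using assms by (cases "x \<le> 1") (auto simp: max_def)
  finally show ?thesis by simp
qed

lemma bracket_pow_le_rho_of_le:
  assumes "\<mu> \<ge> 1" and "real_of_int \<bar>k\<bar> \<le> pi * real_of_int \<bar>n\<bar>"
  shows "bracket k ^ (2 * m) \<le> 4 ^ m * rho m \<mu> n"
proof -
  have "bracket k ^ (2 * m) \<le> 4 ^ m * (real_of_int \<bar>k\<bar> ^ (2 * m) + 1)"
    unfolding bracket_def by (rule one_plus_pow_le) simp
  also have "\<dots> \<le> 4 ^ m * ((pi * real_of_int \<bar>n\<bar>) ^ (2 * m) + \<mu>)"
    using assms by (intro mult_left_mono add_mono power_mono) auto
  finally show ?thesis by (simp add: rho_def)
qed

lemma bracket_pow_le_rho: "\<mu> \<ge> 1 \<Longrightarrow> bracket n ^ (2 * m) \<le> 4 ^ m * rho m \<mu> n"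
  using pi_gt3 by (intro bracket_pow_le_rho_of_le) (auto intro: mult_right_mono[of 1 pi, simplified])

lemma rho_le_bracket_pow:
  assumes "\<mu> \<ge> 0"
  shows "rho m \<mu> n \<le> (pi ^ (2 * m) + \<mu>) * bracket n ^ (2 * m)"
proof -
  have "(pi * real_of_int \<bar>n\<bar>) ^ (2 * m) \<le> pi ^ (2 * m) * bracket n ^ (2 * m)"
    unfolding power_mult_distrib bracket_def by (intro mult_left_mono power_mono) auto
  moreover have "\<mu> \<le> \<mu> * bracket n ^ (2 * m)"
    using assms bracket_ge_1[of n] by (simp add: mult_le_cancel_left1 one_le_power)
  ultimately show ?thesis unfolding rho_def by (simp add: distrib_right)
qed

lemma bracket_diff_le: "bracket (n - l) \<le> bracket n * bracket l"
proof -
  have "real_of_int \<bar>n - l\<bar> \<le> real_of_int \<bar>n\<bar> + real_of_int \<bar>l\<bar>"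
    by linarith
  moreover have "0 \<le> real_of_int \<bar>n\<bar> * real_of_int \<bar>l\<bar>"
    by simp
  ultimately show ?thesis unfolding bracket_def ring_distribs by linarith
qed

lemma inv_rho_le_peetre:
  assumes "\<mu> \<ge> 1"
  shows "1 / rho m \<mu> l \<le> 4 ^ m * bracket n ^ (2 * m) / bracket (n - l) ^ (2 * m)"
proof -
  have "bracket (n - l) ^ (2 * m) \<le> bracket n ^ (2 * m) * bracket l ^ (2 * m)"
    unfolding power_mult_distrib[symmetric]
    by (rule power_mono[OF bracket_diff_le]) (simp add: bracket_def)
  also have "\<dots> \<le> bracket n ^ (2 * m) * (4 ^ m * rho m \<mu> l)"
    by (intro mult_left_mono bracket_pow_le_rho assms) (simp add: bracket_def)
  finally show ?thesis
    using rho_pos[OF assms, of m l] bracket_pos[of "n - l"] by (simp add: field_simps)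
qed

text \<open>Either \<open>\<bar>n - l\<bar> \<le> 2\<bar>n\<bar>\<close> or \<open>\<bar>n - l\<bar> \<le> 2\<bar>l\<bar>\<close>, so one of the two weights dominates
  \<open>\<langle>n - l\<rangle>\<^sup>2\<^sup>m\<close>; this splits the Hilbert--Schmidt kernel into two convolutions.\<close>
lemma inv_rho_mult_le:
  assumes "\<mu> \<ge> 1"
  shows "1 / (rho m \<mu> n * rho m \<mu> l)
    \<le> 4 ^ m / bracket (n - l) ^ (2 * m) * (1 / rho m \<mu> n + 1 / rho m \<mu> l)"
proof -
  have pos: "rho m \<mu> n > 0" "rho m \<mu> l > 0" "bracket (n - l) ^ (2 * m) > 0"
    using rho_pos[OF assms] bracket_pos by auto
  have pi_ge_2: "2 * x \<le> pi * x" if "x \<ge> 0" for x :: real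
    using pi_gt3 that by (intro mult_right_mono) auto
  consider "real_of_int \<bar>n - l\<bar> \<le> 2 * real_of_int \<bar>n\<bar>"
    | "real_of_int \<bar>l - n\<bar> \<le> 2 * real_of_int \<bar>l\<bar>" by linarith
  then have "bracket (n - l) ^ (2 * m) \<le> 4 ^ m * rho m \<mu> n
      \<or> bracket (n - l) ^ (2 * m) \<le> 4 ^ m * rho m \<mu> l"
  proof cases
    case 1
    then have "bracket (n - l) ^ (2 * m) \<le> 4 ^ m * rho m \<mu> n"
      using pi_ge_2[of "real_of_int \<bar>n\<bar>"] by (intro bracket_pow_le_rho_of_le assms) linarith
    then show ?thesis ..
  next
    case 2
    then have "bracket (n - l) ^ (2 * m) \<le> 4 ^ m * rho m \<mu> l"
      using pi_ge_2[of "real_of_int \<bar>l\<bar>"] unfolding bracket_minus_commute[of n]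
      by (intro bracket_pow_le_rho_of_le assms) linarith
    then show ?thesis ..
  qed
  then show ?thesis
    using pos by (auto simp: field_simps intro: add_increasing add_increasing2)
qed

lemma mult_inv_rho_mult_le:
  assumes "\<mu> \<ge> 1" and "c \<ge> 0"
  shows "c / rho m \<mu> l * inverse (rho m \<mu> n)
    \<le> 4 ^ m * (c / bracket (n - l) ^ (2 * m) / rho m \<mu> n + c / bracket (n - l) ^ (2 * m) / rho m \<mu> l)"
proof -
  have "c / rho m \<mu> l * inverse (rho m \<mu> n) = c * (1 / (rho m \<mu> n * rho m \<mu> l))"
    by (simp add: divide_inverse)
  also have "\<dots> \<le> c * (4 ^ m / bracket (n - l) ^ (2 * m) * (1 / rho m \<mu> n + 1 / rho m \<mu> l))"
    by (intro mult_left_mono inv_rho_mult_le assms)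
  also have "\<dots> = 4 ^ m * (c / bracket (n - l) ^ (2 * m) / rho m \<mu> n + c / bracket (n - l) ^ (2 * m) / rho m \<mu> l)"
    by (simp add: algebra_simps add_divide_distrib)
  finally show ?thesis .
qed

definition weighted_l2 :: "nat \<Rightarrow> (int \<Rightarrow> complex) \<Rightarrow> bool" where
  "weighted_l2 m V \<longleftrightarrow> (\<lambda>n. (cmod (V n))\<^sup>2 / bracket n ^ (2 * m)) summable_on UNIV"

definition weighted_l2sq :: "nat \<Rightarrow> (int \<Rightarrow> complex) \<Rightarrow> real" where
  "weighted_l2sq m V = (\<Sum>\<^sub>\<infinity>n. (cmod (V n))\<^sup>2 / bracket n ^ (2 * m))"

lemma weighted_l2sq_nonneg: "weighted_l2sq m V \<ge> 0"
  unfolding weighted_l2sq_def by (intro infsum_nonneg divide_nonneg_pos) (auto simp: bracket_pos)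

lemma norm_add_sq_div_le:
  "(cmod (a + b))\<^sup>2 / c \<le> 2 * ((cmod a)\<^sup>2 / c) + 2 * ((cmod b)\<^sup>2 / c)" if "c > 0"
  using divide_right_mono[OF norm_add_sq_le[of a b], of c] that by (simp add: add_divide_distrib)

lemma weighted_l2_add: "weighted_l2 m a \<Longrightarrow> weighted_l2 m b \<Longrightarrow> weighted_l2 m (\<lambda>n. a n + b n)"
  and weighted_l2sq_add_le: "weighted_l2 m a \<Longrightarrow> weighted_l2 m b \<Longrightarrow>
    weighted_l2sq m (\<lambda>n. a n + b n) \<le> 2 * weighted_l2sq m a + 2 * weighted_l2sq m b"
  using summable_on_le_double_add[of "\<lambda>n. (cmod (a n))\<^sup>2 / bracket n ^ (2 * m)" UNIV
      "\<lambda>n. (cmod (b n))\<^sup>2 / bracket n ^ (2 * m)" "\<lambda>n. (cmod (a n + b n))\<^sup>2 / bracket n ^ (2 * m)"]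
    infsum_le_double_add[of "\<lambda>n. (cmod (a n))\<^sup>2 / bracket n ^ (2 * m)" UNIV
      "\<lambda>n. (cmod (b n))\<^sup>2 / bracket n ^ (2 * m)" "\<lambda>n. (cmod (a n + b n))\<^sup>2 / bracket n ^ (2 * m)"]
    norm_add_sq_div_le bracket_pos
  unfolding weighted_l2_def weighted_l2sq_def by simp_all

lemma weighted_l2_diff: "weighted_l2 m a \<Longrightarrow> weighted_l2 m b \<Longrightarrow> weighted_l2 m (\<lambda>n. a n - b n)"
  using weighted_l2_add[of m a "\<lambda>n. - b n"] by (simp add: weighted_l2_def)

section \<open>The sandwiched potential\<close>

text \<open>\<open>hs_sq m \<mu> V\<close> is the squared Hilbert--Schmidt norm of the operator
  \<open>(D\<^sup>2\<^sup>m + \<mu>)\<^sup>-\<^sup>1\<^sup>/\<^sup>2 V (D\<^sup>2\<^sup>m + \<mu>)\<^sup>-\<^sup>1\<^sup>/\<^sup>2\<close>, whose matrix in the Fourier basis is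
  \<open>V(n - l) / \<surd>(\<rho>(n)\<rho>(l))\<close>.\<close>
definition hs_row :: "nat \<Rightarrow> real \<Rightarrow> (int \<Rightarrow> complex) \<Rightarrow> int \<Rightarrow> real" where
  "hs_row m \<mu> V n = (\<Sum>\<^sub>\<infinity>l. (cmod (V (n - l)))\<^sup>2 / rho m \<mu> l)"

definition hs_sq :: "nat \<Rightarrow> real \<Rightarrow> (int \<Rightarrow> complex) \<Rightarrow> real" where
  "hs_sq m \<mu> V = (\<Sum>\<^sub>\<infinity>n. hs_row m \<mu> V n / rho m \<mu> n)"

lemma hs_row_nonneg: "\<mu> \<ge> 1 \<Longrightarrow> hs_row m \<mu> V n \<ge> 0"
  unfolding hs_row_def using rho_pos by (intro infsum_nonneg divide_nonneg_pos) auto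

lemma hs_sq_nonneg: "\<mu> \<ge> 1 \<Longrightarrow> hs_sq m \<mu> V \<ge> 0"
  unfolding hs_sq_def using hs_row_nonneg rho_pos by (intro infsum_nonneg divide_nonneg_pos) auto

lemma hs_sq_minus_commute: "hs_sq m \<mu> (\<lambda>n. a n - b n) = hs_sq m \<mu> (\<lambda>n. b n - a n)"
  unfolding hs_sq_def hs_row_def by (simp add: norm_minus_commute)

lemma summable_hs_row:
  assumes "\<mu> \<ge> 1" and "weighted_l2 m V"
  shows "(\<lambda>l. (cmod (V (n - l)))\<^sup>2 / rho m \<mu> l) summable_on UNIV"
proof -
  define c where "c = 4 ^ m * bracket n ^ (2 * m)"
  have "(\<lambda>l. c * ((cmod (V (n - l)))\<^sup>2 / bracket (n - l) ^ (2 * m))) summable_on UNIV"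
    using assms(2) unfolding weighted_l2_def
    by (intro summable_on_cmult_right)
      (simp add: summable_on_reflect[of "\<lambda>k. (cmod (V k))\<^sup>2 / bracket k ^ (2 * m)" n])
  moreover have "(cmod (V (n - l)))\<^sup>2 / rho m \<mu> l \<le> c * ((cmod (V (n - l)))\<^sup>2 / bracket (n - l) ^ (2 * m))"
    for l
    using mult_left_mono[OF inv_rho_le_peetre[OF assms(1), of m l n], of "(cmod (V (n - l)))\<^sup>2"]
    unfolding c_def by (simp add: mult_ac)
  ultimately show ?thesis
    by (rule summable_on_comparison_test) (use rho_pos[OF assms(1)] in \<open>auto intro: divide_nonneg_pos\<close>)
qed

lemma hs_row_div_rho_le:
  assumes mu: "\<mu> \<ge> 1" and V: "weighted_l2 m V"
  defines "w \<equiv> \<lambda>k. (cmod (V k))\<^sup>2 / bracket k ^ (2 * m)"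
  shows "hs_row m \<mu> V n / rho m \<mu> n
    \<le> 4 ^ m * (weighted_l2sq m V / rho m \<mu> n + (\<Sum>\<^sub>\<infinity>k. w k / rho m \<mu> (n - k)))"
proof -
  have rp: "rho m \<mu> k > 0" for k using rho_pos[OF mu] .
  have sw: "w summable_on UNIV" using V unfolding weighted_l2_def w_def .
  have wnn: "w k \<ge> 0" for k unfolding w_def using bracket_pos[of k] by simp
  have sa: "(\<lambda>l. w (n - l) / rho m \<mu> n) summable_on UNIV"
    using summable_on_cmult_left[OF summable_on_reflect[of w n, THEN iffD2, OF sw], of "1 / rho m \<mu> n"]
    by simp
  have sb: "(\<lambda>k. w k / rho m \<mu> (n - k)) summable_on UNIV"
    using wnn rp by (intro summable_on_comparison_test[OF sw] divide_le_self rho_ge_1[OF mu])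
      (auto intro: divide_nonneg_pos)
  then have sb': "(\<lambda>l. w (n - l) / rho m \<mu> l) summable_on UNIV"
    using summable_on_reflect[of "\<lambda>k. w k / rho m \<mu> (n - k)" n] by simp
  have "hs_row m \<mu> V n / rho m \<mu> n = (\<Sum>\<^sub>\<infinity>l. (cmod (V (n - l)))\<^sup>2 / rho m \<mu> l * inverse (rho m \<mu> n))"
    unfolding hs_row_def by (simp add: infsum_cmult_left' divide_inverse)
  also have "\<dots> \<le> (\<Sum>\<^sub>\<infinity>l. 4 ^ m * (w (n - l) / rho m \<mu> n + w (n - l) / rho m \<mu> l))"
  proof (rule infsum_mono)
    show "(\<lambda>l. (cmod (V (n - l)))\<^sup>2 / rho m \<mu> l * inverse (rho m \<mu> n)) summable_on UNIV"
      by (rule summable_on_cmult_left[OF summable_hs_row[OF mu V]])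
    show "(\<lambda>l. 4 ^ m * (w (n - l) / rho m \<mu> n + w (n - l) / rho m \<mu> l)) summable_on UNIV"
      by (intro summable_on_cmult_right summable_on_add sa sb')
    show "(cmod (V (n - l)))\<^sup>2 / rho m \<mu> l * inverse (rho m \<mu> n)
        \<le> 4 ^ m * (w (n - l) / rho m \<mu> n + w (n - l) / rho m \<mu> l)" for l
      unfolding w_def by (rule mult_inv_rho_mult_le[OF mu]) simp
  qed
  also have "\<dots> = 4 ^ m * ((\<Sum>\<^sub>\<infinity>l. w (n - l)) / rho m \<mu> n + (\<Sum>\<^sub>\<infinity>l. w (n - l) / rho m \<mu> l))"
    by (simp only: infsum_cmult_right' infsum_add[OF sa sb']) (simp add: divide_inverse infsum_cmult_left')
  also have "\<dots> = 4 ^ m * (weighted_l2sq m V / rho m \<mu> n + (\<Sum>\<^sub>\<infinity>k. w k / rho m \<mu> (n - k)))"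
    using infsum_reflect[of "\<lambda>k. w k / rho m \<mu> (n - k)" n] infsum_reflect[of w n]
    unfolding weighted_l2sq_def w_def by simp
  finally show ?thesis .
qed

lemma hs_sq_le:
  assumes mu: "\<mu> \<ge> 1" and V: "weighted_l2 m V" and S: "(\<lambda>n. 1 / rho m \<mu> n) summable_on UNIV"
  shows "(\<lambda>n. hs_row m \<mu> V n / rho m \<mu> n) summable_on UNIV"
    and "hs_sq m \<mu> V \<le> 2 * 4 ^ m * weighted_l2sq m V * (\<Sum>\<^sub>\<infinity>n. 1 / rho m \<mu> n)"
proof -
  define w where "w k = (cmod (V k))\<^sup>2 / bracket k ^ (2 * m)" for k
  define R where "R = (\<Sum>\<^sub>\<infinity>n. 1 / rho m \<mu> n)"
  have rp: "rho m \<mu> n > 0" for n using rho_pos[OF mu] .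
  have W: "weighted_l2sq m V = infsum w UNIV" unfolding weighted_l2sq_def w_def ..
  have "(\<Sum>n\<in>F. hs_row m \<mu> V n / rho m \<mu> n) \<le> 2 * 4 ^ m * weighted_l2sq m V * R"
    if F: "finite F" for F
  proof -
    have "(\<Sum>n\<in>F. hs_row m \<mu> V n / rho m \<mu> n)
        \<le> (\<Sum>n\<in>F. 4 ^ m * (weighted_l2sq m V / rho m \<mu> n + (\<Sum>\<^sub>\<infinity>k. w k / rho m \<mu> (n - k))))"
      by (rule sum_mono) (use hs_row_div_rho_le[OF mu V] in \<open>simp add: w_def\<close>)
    also have "\<dots> = 4 ^ m * (weighted_l2sq m V * (\<Sum>n\<in>F. 1 / rho m \<mu> n)
          + (\<Sum>n\<in>F. \<Sum>\<^sub>\<infinity>k. w k * (1 / rho m \<mu> (n - k))))"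
      by (simp add: sum_distrib_left[symmetric] sum.distrib sum_distrib_left[of "weighted_l2sq m V"])
    also have "\<dots> \<le> 4 ^ m * (weighted_l2sq m V * R + weighted_l2sq m V * R)"
      using weighted_l2sq_nonneg[of m V] rp S F V unfolding R_def W
      by (intro mult_left_mono add_mono sum_infsum_convolution_le finite_sum_le_infsum)
        (auto simp: w_def weighted_l2_def bracket_pos less_imp_le)
    finally show ?thesis by (simp add: mult_ac)
  qed
  moreover have "hs_row m \<mu> V n / rho m \<mu> n \<ge> 0" for n
    using hs_row_nonneg[OF mu] rp by (simp add: less_imp_le)
  ultimately show "(\<lambda>n. hs_row m \<mu> V n / rho m \<mu> n) summable_on UNIV"
    and "hs_sq m \<mu> V \<le> 2 * 4 ^ m * weighted_l2sq m V * R"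
    using nonneg_summable_on_infsum_le[of "\<lambda>n. hs_row m \<mu> V n / rho m \<mu> n"]
    unfolding hs_sq_def by auto
qed

definition sandwich :: "nat \<Rightarrow> real \<Rightarrow> (int \<Rightarrow> complex) \<Rightarrow> (int \<Rightarrow> complex) \<Rightarrow> int \<Rightarrow> complex" where
  "sandwich m \<mu> V h =
    (\<lambda>n. (\<Sum>\<^sub>\<infinity>l. V (n - l) * h l / of_real (sqrt (rho m \<mu> l))) / of_real (sqrt (rho m \<mu> n)))"

lemma summable_sandwich_term: "\<mu> \<ge> 1 \<Longrightarrow> weighted_l2 m V \<Longrightarrow> l2 h \<Longrightarrow>
    (\<lambda>l. V (n - l) * h l / of_real (sqrt (rho m \<mu> l))) summable_on UNIV"
  and norm_sandwich_sq_le: "\<mu> \<ge> 1 \<Longrightarrow> weighted_l2 m V \<Longrightarrow> l2 h \<Longrightarrow>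
    (cmod (sandwich m \<mu> V h n))\<^sup>2 \<le> hs_row m \<mu> V n / rho m \<mu> n * l2sq h"
proof -
  assume mu: "\<mu> \<ge> 1" and V: "weighted_l2 m V" and h: "l2 h"
  have rp: "rho m \<mu> l > 0" for l using rho_pos[OF mu] .
  define a where "a l = cmod (V (n - l)) / sqrt (rho m \<mu> l)" for l
  define b where "b l = cmod (h l)" for l
  have a2: "(a l)\<^sup>2 = (cmod (V (n - l)))\<^sup>2 / rho m \<mu> l" for l
    unfolding a_def using rp[of l] by (simp add: power_divide)
  have norm_term: "norm (V (n - l) * h l / of_real (sqrt (rho m \<mu> l))) = a l * b l" for l
    unfolding a_def b_def using rp[of l] by (simp add: norm_mult norm_divide)
  have sa: "(\<lambda>l. (a l)\<^sup>2) summable_on UNIV"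
    unfolding a2 by (rule summable_hs_row[OF mu V])
  have sb: "(\<lambda>l. (b l)\<^sup>2) summable_on UNIV"
    using h unfolding l2_def b_def .
  have nonneg: "a l \<ge> 0" "b l \<ge> 0" for l
    unfolding a_def b_def using rp[of l] by auto
  note cs = infsum_mult_le_sqrt[of a b, OF nonneg sa sb]
  have abs: "(\<lambda>l. norm (V (n - l) * h l / of_real (sqrt (rho m \<mu> l)))) summable_on UNIV"
    unfolding norm_term by (rule cs(1))
  then show "(\<lambda>l. V (n - l) * h l / of_real (sqrt (rho m \<mu> l))) summable_on UNIV"
    using summable_on_iff_abs_summable_on_complex by blast
  have "cmod (\<Sum>\<^sub>\<infinity>l. V (n - l) * h l / of_real (sqrt (rho m \<mu> l))) \<le> (\<Sum>\<^sub>\<infinity>l. a l * b l)"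
    using norm_infsum_bound[OF abs] unfolding norm_term .
  also have "\<dots> \<le> sqrt (hs_row m \<mu> V n) * sqrt (l2sq h)"
    using cs(2) unfolding a2 b_def[abs_def] hs_row_def l2sq_def .
  finally have "(cmod (\<Sum>\<^sub>\<infinity>l. V (n - l) * h l / of_real (sqrt (rho m \<mu> l))))\<^sup>2 / rho m \<mu> n
      \<le> (sqrt (hs_row m \<mu> V n) * sqrt (l2sq h))\<^sup>2 / rho m \<mu> n"
    using rp[of n] by (intro divide_right_mono power_mono) auto
  then show "(cmod (sandwich m \<mu> V h n))\<^sup>2 \<le> hs_row m \<mu> V n / rho m \<mu> n * l2sq h"
    using rp[of n] hs_row_nonneg[OF mu, of m V n] l2sq_nonneg[of h]
    by (simp add: sandwich_def norm_divide power_divide power_mult_distrib)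
qed

lemma l2_sandwich: "\<mu> \<ge> 1 \<Longrightarrow> weighted_l2 m V \<Longrightarrow> (\<lambda>n. 1 / rho m \<mu> n) summable_on UNIV \<Longrightarrow>
    l2 h \<Longrightarrow> l2 (sandwich m \<mu> V h)"
  and l2sq_sandwich_le: "\<mu> \<ge> 1 \<Longrightarrow> weighted_l2 m V \<Longrightarrow> (\<lambda>n. 1 / rho m \<mu> n) summable_on UNIV \<Longrightarrow>
    l2 h \<Longrightarrow> l2sq (sandwich m \<mu> V h) \<le> hs_sq m \<mu> V * l2sq h"
proof -
  assume mu: "\<mu> \<ge> 1" and V: "weighted_l2 m V" and S: "(\<lambda>n. 1 / rho m \<mu> n) summable_on UNIV"
    and h: "l2 h"
  note pointwise = norm_sandwich_sq_le[OF mu V h]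
  have s: "(\<lambda>n. hs_row m \<mu> V n / rho m \<mu> n * l2sq h) summable_on UNIV"
    by (rule summable_on_cmult_left[OF hs_sq_le(1)[OF mu V S]])
  show l: "l2 (sandwich m \<mu> V h)"
    unfolding l2_def by (rule summable_on_comparison_test[OF s pointwise]) simp
  have "l2sq (sandwich m \<mu> V h) \<le> (\<Sum>\<^sub>\<infinity>n. hs_row m \<mu> V n / rho m \<mu> n * l2sq h)"
    unfolding l2sq_def[of "sandwich m \<mu> V h"]
    by (rule infsum_mono[OF l[unfolded l2_def] s pointwise])
  also have "\<dots> = hs_sq m \<mu> V * l2sq h"
    unfolding hs_sq_def by (rule infsum_cmult_left')
  finally show "l2sq (sandwich m \<mu> V h) \<le> hs_sq m \<mu> V * l2sq h" .
qed

lemma sandwich_add: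
  assumes "\<mu> \<ge> 1" and "weighted_l2 m V" and "l2 f" and "l2 g"
  shows "sandwich m \<mu> V (\<lambda>n. f n + g n) n = sandwich m \<mu> V f n + sandwich m \<mu> V g n"
  using infsum_add[OF summable_sandwich_term[OF assms(1,2,3)] summable_sandwich_term[OF assms(1,2,4)]]
  unfolding sandwich_def by (simp add: distrib_left add_divide_distrib)

lemma sandwich_diff:
  assumes "\<mu> \<ge> 1" and "weighted_l2 m V" and "l2 f" and "l2 g"
  shows "sandwich m \<mu> V (\<lambda>n. f n - g n) n = sandwich m \<mu> V f n - sandwich m \<mu> V g n"
  using infsum_diff[OF summable_sandwich_term[OF assms(1,2,3)] summable_sandwich_term[OF assms(1,2,4)]]
  unfolding sandwich_def by (simp add: right_diff_distrib diff_divide_distrib)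

lemma sandwich_diff_potential:
  assumes "\<mu> \<ge> 1" and "weighted_l2 m V" and "weighted_l2 m W" and "l2 h"
  shows "sandwich m \<mu> (\<lambda>k. V k - W k) h n = sandwich m \<mu> V h n - sandwich m \<mu> W h n"
  using infsum_diff[OF summable_sandwich_term[OF assms(1,2,4)] summable_sandwich_term[OF assms(1,3,4)]]
  unfolding sandwich_def by (simp add: left_diff_distrib diff_divide_distrib)

lemma sandwich_sum:
  assumes "\<mu> \<ge> 1" and "weighted_l2 m V" and "finite J" and "\<And>j. j \<in> J \<Longrightarrow> l2 (d j)"
  shows "sandwich m \<mu> V (\<lambda>n. \<Sum>j\<in>J. d j n) n = (\<Sum>j\<in>J. sandwich m \<mu> V (d j) n)"
  using assms(3,4)
proof (induction J rule: finite_induct)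
  case empty
  then show ?case by (simp add: sandwich_def)
next
  case (insert x F)
  have "l2 (\<lambda>n. \<Sum>j\<in>F. d j n)"
    using l2_sum[of F d] insert by blast
  then have "sandwich m \<mu> V (\<lambda>n. d x n + (\<Sum>j\<in>F. d j n)) n
      = sandwich m \<mu> V (d x) n + sandwich m \<mu> V (\<lambda>n. \<Sum>j\<in>F. d j n) n"
    using insert.prems by (intro sandwich_add[OF assms(1,2)]) auto
  then show ?case
    using insert by simp
qed

lemma sandwich_tendsto:
  assumes mu: "\<mu> \<ge> 1" and V: "weighted_l2 m V" and "l2 h" and "\<And>K. l2 (f K)"
    and "(\<lambda>K. l2sq (\<lambda>n. h n - f K n)) \<longlonglongrightarrow> 0"
  shows "(\<lambda>K. sandwich m \<mu> V (f K) n) \<longlonglongrightarrow> sandwich m \<mu> V h n"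
proof -
  define c where "c = hs_row m \<mu> V n / rho m \<mu> n"
  have bound: "norm (sandwich m \<mu> V (f K) n - sandwich m \<mu> V h n)
      \<le> sqrt (c * l2sq (\<lambda>n. h n - f K n))" for K
  proof -
    have "norm (sandwich m \<mu> V (f K) n - sandwich m \<mu> V h n)
        = cmod (sandwich m \<mu> V h n - sandwich m \<mu> V (f K) n)"
      by (rule norm_minus_commute)
    also have "\<dots> = cmod (sandwich m \<mu> V (\<lambda>n. h n - f K n) n)"
      by (simp only: sandwich_diff[OF mu V assms(3,4)])
    also have "\<dots> \<le> sqrt (c * l2sq (\<lambda>n. h n - f K n))"
      unfolding c_def using norm_sandwich_sq_le[OF mu V l2_diff[OF assms(3,4)]]
      by (intro real_le_rsqrt)
    finally show ?thesis .
  qed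
  have "(\<lambda>K. sqrt (c * l2sq (\<lambda>n. h n - f K n))) \<longlonglongrightarrow> 0"
    using tendsto_real_sqrt[OF tendsto_mult_right_zero[OF assms(5), of c]] by simp
  then have "(\<lambda>K. sandwich m \<mu> V (f K) n - sandwich m \<mu> V h n) \<longlonglongrightarrow> 0"
    by (rule Lim_null_comparison[OF always_eventually[OF allI[OF bound]]])
  then show ?thesis
    by (rule LIM_zero_cancel)
qed

section \<open>Inverting \<open>I + K\<close> by a Neumann series\<close>

lemma l2sq_le_of_sandwich_eq:
  assumes mu: "\<mu> \<ge> 1" and V: "weighted_l2 m V" and S: "(\<lambda>n. 1 / rho m \<mu> n) summable_on UNIV"
    and small: "hs_sq m \<mu> V \<le> 1/4" and h: "l2 h" and g: "l2 g"
    and eq: "\<And>n. h n + sandwich m \<mu> V h n = g n"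
  shows "l2sq h \<le> 4 * l2sq g"
proof -
  have "h = (\<lambda>n. g n - sandwich m \<mu> V h n)"
    using eq by (auto simp: algebra_simps)
  then have "l2sq h \<le> 2 * l2sq g + 2 * l2sq (sandwich m \<mu> V h)"
    using l2sq_diff_le[OF g l2_sandwich[OF mu V S h]] by simp
  also have "l2sq (sandwich m \<mu> V h) \<le> 1/4 * l2sq h"
    using l2sq_sandwich_le[OF mu V S h] mult_right_mono[OF small l2sq_nonneg[of h]] by linarith
  finally show ?thesis by linarith
qed

lemma sum_half_powers:
  "J \<le> K \<Longrightarrow> (\<Sum>j\<in>{J..<K}. (1/2::real) ^ j) = 2 * (1/2) ^ J - 2 * (1/2) ^ K"
  by (induction K rule: dec_induct) simp_all

lemma l2sq_geometric_sum_le: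
  assumes d: "\<And>j. l2 (d j)" "\<And>j. l2sq (d j) \<le> (1/4) ^ j * L"
  shows "l2sq (\<lambda>n. \<Sum>j\<in>{J..<J + K}. d j n) \<le> 4 * (1/4) ^ J * L"
proof -
  have four: "(1/4::real) ^ j = (1/2) ^ j * (1/2) ^ j" for j
    by (simp add: power_mult_distrib[symmetric])
  have geom: "(\<Sum>j\<in>{J..<J + K}. (1/2::real) ^ j) \<le> 2 * (1/2) ^ J"
    by (simp add: sum_half_powers)
  have L: "L \<ge> 0"
    using order_trans[OF l2sq_nonneg d(2)[of 0]] by simp
  have "l2sq (\<lambda>n. \<Sum>j\<in>{J..<J + K}. d j n)
      \<le> (\<Sum>j\<in>{J..<J + K}. (1/2) ^ j) * (\<Sum>j\<in>{J..<J + K}. l2sq (d j) / (1/2) ^ j)"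
    using d(1) by (intro l2sq_sum_le_weighted) auto
  also have "\<dots> \<le> (2 * (1/2) ^ J) * ((2 * (1/2) ^ J) * L)"
  proof (intro mult_mono geom)
    have "(\<Sum>j\<in>{J..<J + K}. l2sq (d j) / (1/2) ^ j) \<le> (\<Sum>j\<in>{J..<J + K}. (1/2) ^ j * L)"
    proof (rule sum_mono)
      fix j
      have "l2sq (d j) / (1/2) ^ j \<le> (1/2) ^ j * (1/2) ^ j * L / (1/2) ^ j"
        using d(2)[of j] unfolding four by (rule divide_right_mono) simp
      then show "l2sq (d j) / (1/2) ^ j \<le> (1/2) ^ j * L"
        by simp
    qed
    also have "\<dots> \<le> (2 * (1/2) ^ J) * L"
      using geom L unfolding sum_distrib_right[symmetric] by (intro mult_right_mono)
    finally show "(\<Sum>j\<in>{J..<J + K}. l2sq (d j) / (1/2) ^ j) \<le> 2 * (1/2) ^ J * L" .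
  qed (use L in \<open>auto intro!: sum_nonneg divide_nonneg_pos l2sq_nonneg\<close>)
  finally show ?thesis by (simp add: four)
qed

lemma l2_series:
  assumes d: "\<And>j. l2 (d j)" "\<And>j. l2sq (d j) \<le> (1/4) ^ j * L"
  defines "h \<equiv> \<lambda>n. \<Sum>j. d j n"
  shows "\<And>n. (\<lambda>K. \<Sum>j<K. d j n) \<longlonglongrightarrow> h n"
    and "\<And>K. l2 (\<lambda>n. h n - (\<Sum>j<K. d j n))"
    and "\<And>K. l2sq (\<lambda>n. h n - (\<Sum>j<K. d j n)) \<le> 4 * (1/4) ^ K * L"
proof -
  have coord: "norm (d j n) \<le> (1/2) ^ j * sqrt L" for j n
  proof -
    have "norm (d j n) \<le> sqrt ((1/4) ^ j * L)"
      using order_trans[OF norm_sq_le_l2sq[OF d(1)] d(2)] by (intro real_le_rsqrt) simp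
    also have "\<dots> = (1/2) ^ j * sqrt L"
      by (simp add: real_sqrt_mult real_sqrt_power real_sqrt_divide)
    finally show ?thesis .
  qed
  have "summable (\<lambda>j. (1/2::real) ^ j * sqrt L)"
    by (intro summable_mult2 summable_geometric) simp
  then have "summable (\<lambda>j. d j n)" for n
    using coord by (rule summable_comparison_test'[where N=0])
  then show conv: "(\<lambda>K. \<Sum>j<K. d j n) \<longlonglongrightarrow> h n" for n
    unfolding h_def by (rule summable_LIMSEQ)
  fix K
  have split: "(\<Sum>j<N + K. d j n) - (\<Sum>j<K. d j n) = (\<Sum>j\<in>{K..<K + N}. d j n)" for N n
    by (metis add.commute le_add2 lessThan_atLeast0 sum_diff_nat_ivl zero_le)
  have lim: "(\<lambda>N. \<Sum>j\<in>{K..<K + N}. d j n) \<longlonglongrightarrow> h n - (\<Sum>j<K. d j n)" for n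
    using tendsto_diff[OF LIMSEQ_ignore_initial_segment[OF conv[of n], of K]
        tendsto_const[of "\<Sum>j<K. d j n"]]
    unfolding split .
  have "l2 (\<lambda>n. \<Sum>j\<in>{K..<K + N}. d j n)" for N
    using d(1) by (simp add: l2_sum)
  then show "l2 (\<lambda>n. h n - (\<Sum>j<K. d j n))"
    and "l2sq (\<lambda>n. h n - (\<Sum>j<K. d j n)) \<le> 4 * (1/4) ^ K * L"
    using l2_pointwise_limit[OF lim _ l2sq_geometric_sum_le[OF d]] by blast+
qed

lemma l2_neg_sandwich_iterate:
  assumes mu: "\<mu> \<ge> 1" and V: "weighted_l2 m V" and S: "(\<lambda>n. 1 / rho m \<mu> n) summable_on UNIV"
    and small: "hs_sq m \<mu> V \<le> 1/4" and g: "l2 g"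
  shows "l2 (((\<lambda>f n. - sandwich m \<mu> V f n) ^^ j) g)
    \<and> l2sq (((\<lambda>f n. - sandwich m \<mu> V f n) ^^ j) g) \<le> (1/4) ^ j * l2sq g"
proof (induction j)
  case 0
  then show ?case using g by simp
next
  case (Suc j)
  let ?d = "((\<lambda>f n. - sandwich m \<mu> V f n) ^^ j) g"
  have "l2sq (sandwich m \<mu> V ?d) \<le> 1/4 * ((1/4) ^ j * l2sq g)"
    using Suc l2sq_sandwich_le[OF mu V S, of ?d] mult_right_mono[OF small l2sq_nonneg[of ?d]] by simp
  then show ?case
    using Suc l2_sandwich[OF mu V S, of ?d] by (simp add: l2_uminus l2sq_uminus)
qed

text \<open>The Neumann series \<open>h = \<Sum>\<^sub>j (-K)\<^sup>j g\<close>; each term vanishes outside \<open>P\<close> because \<open>g\<close> does and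
  \<open>K\<close> preserves this property.\<close>
lemma sandwich_eq_solvable:
  assumes mu: "\<mu> \<ge> 1" and V: "weighted_l2 m V" and S: "(\<lambda>n. 1 / rho m \<mu> n) summable_on UNIV"
    and small: "hs_sq m \<mu> V \<le> 1/4" and g: "l2 g" and g_P: "\<And>n. \<not> P n \<Longrightarrow> g n = 0"
    and sandwich_P: "\<And>f n. (\<And>n. \<not> P n \<Longrightarrow> f n = 0) \<Longrightarrow> \<not> P n \<Longrightarrow> sandwich m \<mu> V f n = 0"
  shows "\<exists>h. l2 h \<and> (\<forall>n. h n + sandwich m \<mu> V h n = g n) \<and> (\<forall>n. \<not> P n \<longrightarrow> h n = 0)"
proof -
  define d where "d j = ((\<lambda>f n. - sandwich m \<mu> V f n) ^^ j) g" for j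
  have d0: "d 0 = g" and dSuc: "d (Suc j) = (\<lambda>n. - sandwich m \<mu> V (d j) n)" for j
    by (simp_all add: d_def)
  have d: "l2 (d j) \<and> l2sq (d j) \<le> (1/4) ^ j * l2sq g" for j
    unfolding d_def by (rule l2_neg_sandwich_iterate[OF mu V S small g])
  have d_P: "\<not> P n \<Longrightarrow> d j n = 0" for j n
    by (induction j arbitrary: n) (simp_all add: d0 dSuc g_P sandwich_P)
  define h where "h n = (\<Sum>j. d j n)" for n
  define H where "H K n = (\<Sum>j<K. d j n)" for K n
  note series = l2_series[of d "l2sq g", folded h_def H_def, OF conjunct1[OF d] conjunct2[OF d]]
  have H: "l2 (H K)" for K
    unfolding H_def using d by (simp add: l2_sum)
  have h: "l2 h"
    using series(2)[of 0] by (simp add: H_def)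
  have partial: "H K n + sandwich m \<mu> V (H K) n = g n - d K n" for K n
  proof -
    have "sandwich m \<mu> V (H K) n = (\<Sum>j<K. - d (Suc j) n)"
      unfolding H_def using d by (simp add: sandwich_sum[OF mu V] dSuc)
    then show ?thesis
      using sum_lessThan_telescope'[of "\<lambda>j. d j n" K]
      by (simp add: H_def sum_negf[symmetric] sum.distrib[symmetric] d0)
  qed
  have "(\<lambda>K. 4 * (1/4) ^ K * l2sq g) \<longlonglongrightarrow> 0"
    by (intro tendsto_mult_left_zero tendsto_mult_right_zero LIMSEQ_power_zero) simp
  then have "(\<lambda>K. l2sq (\<lambda>n. h n - H K n)) \<longlonglongrightarrow> 0"
    by (rule Lim_null_comparison[OF always_eventually, rotated])
      (use series(3) l2sq_nonneg in \<open>simp add: H_def\<close>)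
  then have "(\<lambda>K. H K n + sandwich m \<mu> V (H K) n) \<longlonglongrightarrow> h n + sandwich m \<mu> V h n" for n
    by (intro tendsto_add series(1) sandwich_tendsto[OF mu V h H])
  moreover have "(\<lambda>K. d K n) \<longlonglongrightarrow> 0" for n
    using series(1)[of n] unfolding H_def
    by (intro summable_LIMSEQ_zero) (auto simp: summable_def sums_def)
  ultimately have "h n + sandwich m \<mu> V h n = g n" for n
    unfolding partial using tendsto_diff[OF tendsto_const] LIMSEQ_unique by fastforce
  then show ?thesis
    using h d_P by (auto simp: h_def)
qed

section \<open>Choice of the shift\<close>

lemma sum_abs_int_le:
  fixes \<phi> :: "nat \<Rightarrow> real"
  assumes "\<And>k. \<phi> k \<ge> 0" and "\<And>M. (\<Sum>k<M. \<phi> k) \<le> C" and "finite F"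
  shows "(\<Sum>n\<in>F. \<phi> (nat \<bar>n\<bar>)) \<le> 2 * C"
proof -
  have half: "(\<Sum>n\<in>A. \<phi> (nat \<bar>n\<bar>)) \<le> C" if AF: "A \<subseteq> F" and inj: "inj_on (\<lambda>n. nat \<bar>n\<bar>) A" for A
  proof -
    obtain M where M: "(\<lambda>n. nat \<bar>n\<bar>) ` A \<subseteq> {..<M}"
      using finite_nat_bounded[of "(\<lambda>n. nat \<bar>n\<bar>) ` A"] finite_subset[OF AF assms(3)] by blast
    have "(\<Sum>n\<in>A. \<phi> (nat \<bar>n\<bar>)) = (\<Sum>k\<in>(\<lambda>n. nat \<bar>n\<bar>) ` A. \<phi> k)"
      by (simp add: sum.reindex[OF inj])
    also have "\<dots> \<le> (\<Sum>k<M. \<phi> k)"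
      using M assms(1) by (intro sum_mono2) auto
    finally show ?thesis using assms(2)[of M] by linarith
  qed
  have "F = {n\<in>F. n \<ge> 0} \<union> {n\<in>F. n < 0}" by auto
  then have "(\<Sum>n\<in>F. \<phi> (nat \<bar>n\<bar>))
      = (\<Sum>n\<in>{n\<in>F. n \<ge> 0}. \<phi> (nat \<bar>n\<bar>)) + (\<Sum>n\<in>{n\<in>F. n < 0}. \<phi> (nat \<bar>n\<bar>))"
    using assms(3) by (metis (no_types, lifting) sum.union_disjoint disjoint_iff finite_Un
        mem_Collect_eq not_le)
  also have "\<dots> \<le> C + C"
    by (intro add_mono half) (auto simp: inj_on_def)
  finally show ?thesis by simp
qed

lemma rho_ge_sq: "m \<ge> 1 \<Longrightarrow> rho m \<mu> n \<ge> (real_of_int \<bar>n\<bar>)\<^sup>2 + \<mu>"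
proof -
  assume "m \<ge> 1"
  have "(real_of_int \<bar>n\<bar>)\<^sup>2 \<le> (pi * real_of_int \<bar>n\<bar>) ^ (2 * m)"
  proof (cases "n = 0")
    case False
    then have "(real_of_int \<bar>n\<bar>)\<^sup>2 \<le> real_of_int \<bar>n\<bar> ^ (2 * m)"
      using \<open>m \<ge> 1\<close> by (intro power_increasing) auto
    also have "\<dots> \<le> (pi * real_of_int \<bar>n\<bar>) ^ (2 * m)"
      using pi_gt3 by (intro power_mono) (auto intro: mult_right_mono[of 1 pi, simplified])
    finally show ?thesis .
  qed (use \<open>m \<ge> 1\<close> in simp)
  then show ?thesis unfolding rho_def by simp
qed

lemma inv_rho_le_telescoping:
  assumes "m \<ge> 1" and "t \<ge> 1"
  shows "1 / rho m (t\<^sup>2) n \<le> 2 * (1 / (real (nat \<bar>n\<bar>) + t - 1/2) - 1 / (real (Suc (nat \<bar>n\<bar>)) + t - 1/2))"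
proof -
  define a where "a = real_of_int \<bar>n\<bar> + t"
  have a: "a \<ge> 1" unfolding a_def using assms(2) by simp
  have "a\<^sup>2 \<le> 2 * ((real_of_int \<bar>n\<bar>)\<^sup>2 + t\<^sup>2)"
    unfolding a_def using sum_squares_bound[of "real_of_int \<bar>n\<bar>" t]
    by (simp add: power2_eq_square algebra_simps)
  also have "\<dots> \<le> 2 * rho m (t\<^sup>2) n"
    using rho_ge_sq[OF assms(1), where \<mu>="t\<^sup>2" and n=n] by simp
  finally have "a\<^sup>2 \<le> 2 * rho m (t\<^sup>2) n" .
  then have "2 / (2 * rho m (t\<^sup>2) n) \<le> 2 / a\<^sup>2"
    using a rho_pos[of "t\<^sup>2" m n] assms(2) by (intro divide_left_mono) (simp_all add: one_le_power)
  then have "1 / rho m (t\<^sup>2) n \<le> 2 / a\<^sup>2"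
    by simp
  also have "\<dots> \<le> 2 / ((a - 1/2) * (a + 1/2))"
    using a by (intro divide_left_mono mult_pos_pos) (auto simp: power2_eq_square algebra_simps)
  also have "\<dots> = 2 * (1 / (a - 1/2) - 1 / (a + 1/2))"
    using a by (simp add: field_simps)
  finally show ?thesis
    unfolding a_def by (simp add: algebra_simps)
qed

lemma summable_inv_rho: "m \<ge> 1 \<Longrightarrow> t \<ge> 1 \<Longrightarrow> (\<lambda>n. 1 / rho m (t\<^sup>2) n) summable_on UNIV"
  and infsum_inv_rho_le: "m \<ge> 1 \<Longrightarrow> t \<ge> 1 \<Longrightarrow> (\<Sum>\<^sub>\<infinity>n. 1 / rho m (t\<^sup>2) n) \<le> 8 / t"
proof -
  assume m: "m \<ge> 1" and t: "t \<ge> 1"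
  define G where "G k = 1 / (real k + t - 1/2)" for k
  have G_pos: "G k > 0" for k unfolding G_def using t by simp
  have tele: "(\<Sum>k<M. 2 * (G k - G (Suc k))) \<le> 4 / t" for M
  proof -
    have "(\<Sum>k<M. 2 * (G k - G (Suc k))) = 2 * (G 0 - G M)"
      by (simp only: sum_distrib_left[symmetric] sum_lessThan_telescope')
    also have "\<dots> \<le> 2 * G 0"
      using G_pos[of M] by simp
    also have "\<dots> \<le> 4 / t"
      using t by (simp add: G_def field_simps)
    finally show ?thesis .
  qed
  have nonneg: "2 * (G k - G (Suc k)) \<ge> 0" for k
    unfolding G_def using t by (simp add: frac_le)
  have finite_sums_le: "(\<Sum>n\<in>F. 1 / rho m (t\<^sup>2) n) \<le> 8 / t" if "finite F" for F
  proof -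
    have "(\<Sum>n\<in>F. 1 / rho m (t\<^sup>2) n) \<le> (\<Sum>n\<in>F. 2 * (G (nat \<bar>n\<bar>) - G (Suc (nat \<bar>n\<bar>))))"
      by (rule sum_mono) (use inv_rho_le_telescoping[OF m t] in \<open>simp add: G_def\<close>)
    also have "\<dots> \<le> 2 * (4 / t)"
      by (rule sum_abs_int_le[OF nonneg tele that])
    finally show ?thesis by simp
  qed
  have inv_rho_nonneg: "1 / rho m (t\<^sup>2) n \<ge> 0" for n
    using rho_pos[of "t\<^sup>2" m n] t by (simp add: one_le_power less_imp_le)
  show "(\<lambda>n. 1 / rho m (t\<^sup>2) n) summable_on UNIV" and "(\<Sum>\<^sub>\<infinity>n. 1 / rho m (t\<^sup>2) n) \<le> 8 / t"
    using nonneg_summable_on_infsum_le[OF inv_rho_nonneg finite_sums_le] by auto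
qed

lemma hs_sq_small:
  assumes "m \<ge> 1" and "c > 0"
  obtains \<mu> where "\<mu> \<ge> 1" and "(\<lambda>n. 1 / rho m \<mu> n) summable_on UNIV"
    and "\<And>X. weighted_l2 m X \<Longrightarrow> hs_sq m \<mu> X \<le> c * weighted_l2sq m X"
proof
  define t where "t = max 1 (16 * 4 ^ m / c)"
  have t: "t \<ge> 1" and "16 * 4 ^ m / c \<le> t" unfolding t_def by simp_all
  then have ct: "16 * 4 ^ m / t \<le> c"
    using assms(2) by (simp add: field_simps)
  show "t\<^sup>2 \<ge> 1" and S: "(\<lambda>n. 1 / rho m (t\<^sup>2) n) summable_on UNIV"
    using t summable_inv_rho[OF assms(1) t] by (simp_all add: one_le_power)
  fix X
  assume X: "weighted_l2 m X"
  have "hs_sq m (t\<^sup>2) X \<le> 2 * 4 ^ m * weighted_l2sq m X * (\<Sum>\<^sub>\<infinity>n. 1 / rho m (t\<^sup>2) n)"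
    using t by (intro hs_sq_le(2)[OF _ X S]) (simp add: one_le_power)
  also have "\<dots> \<le> 2 * 4 ^ m * weighted_l2sq m X * (8 / t)"
    using weighted_l2sq_nonneg[of m X] by (intro mult_left_mono infsum_inv_rho_le assms(1) t) simp
  also have "\<dots> = 16 * 4 ^ m / t * weighted_l2sq m X"
    by simp
  also have "\<dots> \<le> c * weighted_l2sq m X"
    using ct weighted_l2sq_nonneg by (rule mult_right_mono)
  finally show "hs_sq m (t\<^sup>2) X \<le> c * weighted_l2sq m X" .
qed

section \<open>Fourier description of the operators\<close>

lemma bracket_powr: "bracket n powr (2 * real m) = bracket n ^ (2 * m)"
  using powr_realpow[OF bracket_pos, of n "2 * m"] by simp

lemma bracket_powr_neg: "bracket n powr (2 * - real m) = 1 / bracket n ^ (2 * m)"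
  using bracket_powr[of n m] by (simp add: powr_minus divide_inverse)

lemma sobolev_0_iff: "f \<in> sobolev pl 0 \<longleftrightarrow> (\<forall>n. f n \<noteq> 0 \<longrightarrow> parity_ok pl n) \<and> l2 f"
  unfolding sobolev_def l2_def by (simp add: bracket_neq_0)

lemma sobolev_neg_iff:
  "V \<in> sobolev True (- real m) \<longleftrightarrow> (\<forall>k. V k \<noteq> 0 \<longrightarrow> even k) \<and> weighted_l2 m V"
  unfolding sobolev_def weighted_l2_def parity_ok_def bracket_powr_neg by simp

lemma sob_norm_neg: "sob_norm (- real m) f = sqrt (weighted_l2sq m f)"
  unfolding sob_norm_def weighted_l2sq_def bracket_powr_neg by simp

lemma sobolev_iff_l2_sqrt_rho:
  assumes mu: "\<mu> \<ge> 1"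
  shows "u \<in> sobolev pl (real m) \<longleftrightarrow>
    (\<forall>n. u n \<noteq> 0 \<longrightarrow> parity_ok pl n) \<and> l2 (\<lambda>n. of_real (sqrt (rho m \<mu> n)) * u n)"
proof -
  have rp: "rho m \<mu> n > 0" for n using rho_pos[OF mu] .
  have "(\<lambda>n. bracket n ^ (2 * m) * (cmod (u n))\<^sup>2) summable_on UNIV
      \<longleftrightarrow> (\<lambda>n. rho m \<mu> n * (cmod (u n))\<^sup>2) summable_on UNIV" (is "?B \<longleftrightarrow> ?R")
  proof
    assume ?B
    have "rho m \<mu> n * (cmod (u n))\<^sup>2 \<le> (pi ^ (2 * m) + \<mu>) * (bracket n ^ (2 * m) * (cmod (u n))\<^sup>2)" for n
      using mult_right_mono[OF rho_le_bracket_pow[of \<mu> m n], of "(cmod (u n))\<^sup>2"] mu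
      by (simp add: mult.assoc)
    then show ?R
      using rp by (intro summable_on_comparison_test[OF summable_on_cmult_right[OF \<open>?B\<close>]])
        (simp_all add: less_imp_le)
  next
    assume ?R
    have "bracket n ^ (2 * m) * (cmod (u n))\<^sup>2 \<le> 4 ^ m * (rho m \<mu> n * (cmod (u n))\<^sup>2)" for n
      using mult_right_mono[OF bracket_pow_le_rho[OF mu, of n m], of "(cmod (u n))\<^sup>2"]
      by (simp add: mult.assoc)
    then show ?B
      using bracket_pos by (intro summable_on_comparison_test[OF summable_on_cmult_right[OF \<open>?R\<close>]])
        (simp_all add: less_imp_le)
  qed
  moreover have "(cmod (of_real (sqrt (rho m \<mu> n)) * u n))\<^sup>2 = rho m \<mu> n * (cmod (u n))\<^sup>2" for n
    using rp[of n] by (simp add: norm_mult power_mult_distrib)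
  ultimately show ?thesis
    unfolding sobolev_def l2_def by (simp add: bracket_powr)
qed

lemma l2_div_sqrt_rho: "\<mu> \<ge> 1 \<Longrightarrow> l2 h \<Longrightarrow> l2 (\<lambda>n. h n / of_real (sqrt (rho m \<mu> n)))"
  and l2sq_div_sqrt_rho_le:
    "\<mu> \<ge> 1 \<Longrightarrow> l2 h \<Longrightarrow> l2sq (\<lambda>n. h n / of_real (sqrt (rho m \<mu> n))) \<le> l2sq h / \<mu>"
proof -
  assume mu: "\<mu> \<ge> 1" and h: "l2 h"
  have le: "(cmod (h n / of_real (sqrt (rho m \<mu> n))))\<^sup>2 \<le> 1 / \<mu> * (cmod (h n))\<^sup>2" for n
    using rho_pos[OF mu, of m n] rho_ge[of \<mu> m n] mu
    by (simp add: norm_divide power_divide divide_left_mono)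
  have s: "(\<lambda>n. 1 / \<mu> * (cmod (h n))\<^sup>2) summable_on UNIV"
    using h unfolding l2_def by (rule summable_on_cmult_right)
  show l: "l2 (\<lambda>n. h n / of_real (sqrt (rho m \<mu> n)))"
    unfolding l2_def by (rule summable_on_comparison_test[OF s le]) simp
  have "l2sq (\<lambda>n. h n / of_real (sqrt (rho m \<mu> n))) \<le> (\<Sum>\<^sub>\<infinity>n. 1 / \<mu> * (cmod (h n))\<^sup>2)"
    unfolding l2sq_def by (rule infsum_mono[OF l[unfolded l2_def] s le])
  then show "l2sq (\<lambda>n. h n / of_real (sqrt (rho m \<mu> n))) \<le> l2sq h / \<mu>"
    unfolding l2sq_def by (simp only: infsum_cmult_right') simp
qed

lemma sandwich_parity:
  assumes "\<And>k. V k \<noteq> 0 \<Longrightarrow> even k" and "\<And>n. \<not> parity_ok pl n \<Longrightarrow> f n = 0"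
    and "\<not> parity_ok pl n"
  shows "sandwich m \<mu> V f n = 0"
proof -
  have "V (n - l) * f l / of_real (sqrt (rho m \<mu> l)) = 0" for l
  proof (rule ccontr)
    assume "V (n - l) * f l / of_real (sqrt (rho m \<mu> l)) \<noteq> 0"
    then have "V (n - l) \<noteq> 0" and "f l \<noteq> 0"
      by auto
    then have "even (n - l)" and "parity_ok pl l"
      using assms(1,2) by blast+
    then have "parity_ok pl n"
      unfolding parity_ok_def by (cases pl) (auto simp: even_diff)
    then show False using assms(3) by simp
  qed
  then have "(\<lambda>l. V (n - l) * f l / of_real (sqrt (rho m \<mu> l))) = (\<lambda>l. 0)"
    by (rule ext)
  then show ?thesis
    unfolding sandwich_def by simp
qed

lemma Dpow_fmult_eq_sandwich:
  fixes m :: nat and \<mu> :: real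
  assumes mu: "\<mu> \<ge> 1"
  defines "r \<equiv> \<lambda>n. complex_of_real (sqrt (rho m \<mu> n))"
  shows "Dpow m u n + fmult V u n + of_real \<mu> * u n
    = r n * (r n * u n + sandwich m \<mu> V (\<lambda>l. r l * u l) n)"
proof -
  have r: "r n \<noteq> 0" "r n * r n = of_real (rho m \<mu> n)" for n
    unfolding r_def using rho_pos[OF mu, of m n] by (simp_all flip: of_real_mult)
  have "(\<lambda>l. V (n - l) * (r l * u l) / r l) = (\<lambda>l. V (n - l) * u l)"
    using r(1) by simp
  then have "fmult V u n = r n * sandwich m \<mu> V (\<lambda>l. r l * u l) n"
    unfolding fmult_def sandwich_def using r(1)[of n] by (simp add: r_def)
  then show ?thesis
    using Dpow_add_eq_rho[of m u n \<mu>] r(2)[of n] by (simp add: algebra_simps)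
qed

section \<open>Gap estimates\<close>

lemma l2sq_sandwich_solutions_diff_le:
  assumes mu: "\<mu> \<ge> 1" and S: "(\<lambda>n. 1 / rho m \<mu> n) summable_on UNIV"
    and V1: "weighted_l2 m V1" and V2: "weighted_l2 m V2"
    and small1: "hs_sq m \<mu> V1 \<le> 1/4" and small2: "hs_sq m \<mu> V2 \<le> 1/4"
    and h1: "l2 h1" and h2: "l2 h2" and g: "l2 g"
    and eq1: "\<And>n. h1 n + sandwich m \<mu> V1 h1 n = g n"
    and eq2: "\<And>n. h2 n + sandwich m \<mu> V2 h2 n = g n"
  shows "l2sq (\<lambda>n. h1 n - h2 n) \<le> 16 * hs_sq m \<mu> (\<lambda>k. V2 k - V1 k) * l2sq g"
proof -
  define D where "D = (\<lambda>k. V2 k - V1 k)"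
  have D: "weighted_l2 m D"
    unfolding D_def by (rule weighted_l2_diff[OF V2 V1])
  have "(h1 n - h2 n) + sandwich m \<mu> V2 (\<lambda>n. h1 n - h2 n) n = sandwich m \<mu> D h1 n" for n
  proof -
    have "sandwich m \<mu> V1 h1 n = g n - h1 n" and "sandwich m \<mu> V2 h2 n = g n - h2 n"
      using eq1[of n] eq2[of n] by (simp_all add: eq_diff_eq add.commute)
    then show ?thesis
      unfolding D_def sandwich_diff[OF mu V2 h1 h2] sandwich_diff_potential[OF mu V2 V1 h1]
      by (simp add: algebra_simps)
  qed
  then have "l2sq (\<lambda>n. h1 n - h2 n) \<le> 4 * l2sq (sandwich m \<mu> D h1)"
    by (rule l2sq_le_of_sandwich_eq[OF mu V2 S small2 l2_diff[OF h1 h2] l2_sandwich[OF mu D S h1]])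
  also have "\<dots> \<le> 4 * (hs_sq m \<mu> D * l2sq h1)"
    using l2sq_sandwich_le[OF mu D S h1] by simp
  also have "\<dots> \<le> 4 * (hs_sq m \<mu> D * (4 * l2sq g))"
    using l2sq_le_of_sandwich_eq[OF mu V1 S small1 h1 g eq1] hs_sq_nonneg[OF mu]
    by (intro mult_left_mono) auto
  finally show ?thesis
    by (simp add: D_def)
qed

lemma dist_to_le:
  assumes "y \<in> N"
  shows "dist_to x N \<le> pnorm (pdiff x y)"
proof -
  have "pnorm (pdiff x y) \<in> {pnorm (pdiff x y) | y. y \<in> N}"
    using assms by blast
  moreover have "bdd_below {pnorm (pdiff x y) | y. y \<in> N}"
    by (rule bdd_belowI[where m=0]) (auto simp: pnorm_def intro!: add_nonneg_nonneg l2sq_nonneg)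
  ultimately show ?thesis
    unfolding dist_to_def by (rule cInf_lower)
qed

lemma dist_to_le_of_shift:
  assumes "(w, b) \<in> N" and "\<And>n. a n + of_real \<mu> * u n = b n + of_real \<mu> * w n"
  shows "dist_to (u, a) N \<le> sqrt ((1 + \<mu>\<^sup>2) * l2sq (\<lambda>n. u n - w n))"
proof -
  have "a n - b n = of_real (- \<mu>) * (u n - w n)" for n
    using assms(2)[of n] by (simp add: algebra_simps)
  then have "pdiff (u, a) (w, b) = ((\<lambda>n. u n - w n), (\<lambda>n. of_real (- \<mu>) * (u n - w n)))"
    by (simp add: pdiff_def)
  then have "pnorm (pdiff (u, a) (w, b)) = sqrt ((1 + \<mu>\<^sup>2) * l2sq (\<lambda>n. u n - w n))"
    by (simp only: pnorm_def fst_conv snd_conv l2sq_cmult) (simp add: algebra_simps)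
  then show ?thesis
    using dist_to_le[OF assms(1), of "(u, a)"] by simp
qed

lemma gap_dir_le:
  assumes "\<And>x. x \<in> M \<Longrightarrow> pnorm x = 1 \<Longrightarrow> dist_to x N \<le> b" and "0 \<le> b"
  shows "gap_dir M N \<le> b" and "0 \<le> gap_dir M N"
proof -
  have le: "z \<le> b" if "z \<in> insert 0 {dist_to x N | x. x \<in> M \<and> pnorm x = 1}" for z
    using that assms by auto
  show "gap_dir M N \<le> b"
    unfolding gap_dir_def by (rule cSup_least) (use le in auto)
  show "0 \<le> gap_dir M N"
    unfolding gap_dir_def by (rule cSup_upper) (auto intro!: bdd_aboveI[where M=b] le)
qed

lemma S_dom_sandwich_eq:
  fixes m :: nat and \<mu> :: real
  assumes mu: "\<mu> \<ge> 1" and u: "u \<in> S_dom pl m V"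
  defines "r \<equiv> \<lambda>n. complex_of_real (sqrt (rho m \<mu> n))"
    and "f \<equiv> \<lambda>n. Dpow m u n + fmult V u n + of_real \<mu> * u n"
  shows "l2 (\<lambda>n. r n * u n)" and "l2 u" and "f \<in> sobolev pl 0"
    and "\<And>n. r n * u n + sandwich m \<mu> V (\<lambda>l. r l * u l) n = f n / r n"
proof -
  have r: "r n \<noteq> 0" for n
    unfolding r_def using rho_pos[OF mu, of m n] by simp
  have u_m: "u \<in> sobolev pl (real m)" and Su: "(\<lambda>n. Dpow m u n + fmult V u n) \<in> sobolev pl 0"
    using u unfolding S_dom_def by auto
  show ru: "l2 (\<lambda>n. r n * u n)"
    using u_m unfolding sobolev_iff_l2_sqrt_rho[OF mu] r_def by blast
  show ul: "l2 u"
    using l2_div_sqrt_rho[OF mu ru, where m=m] r unfolding r_def by simp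
  have "f n = 0" if "\<not> parity_ok pl n" for n
  proof -
    have "u n = 0"
      using u_m that unfolding sobolev_def by auto
    moreover have "Dpow m u n + fmult V u n = 0"
      using Su that unfolding sobolev_0_iff by auto
    ultimately show ?thesis
      unfolding f_def by simp
  qed
  moreover have "l2 f"
    using Su l2_add[OF _ l2_cmult[OF ul]] unfolding f_def sobolev_0_iff by blast
  ultimately show "f \<in> sobolev pl 0"
    unfolding sobolev_0_iff by blast
  show "r n * u n + sandwich m \<mu> V (\<lambda>l. r l * u l) n = f n / r n" for n
    using Dpow_fmult_eq_sandwich[OF mu, where m=m and u=u and n=n and V=V] r[of n] unfolding f_def r_def
    by (simp add: field_simps)
qed

lemma sandwich_eq_solvable_parity:
  assumes mu: "\<mu> \<ge> 1" and V: "V \<in> sobolev True (- real m)"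
    and S: "(\<lambda>n. 1 / rho m \<mu> n) summable_on UNIV" and small: "hs_sq m \<mu> V \<le> 1/4"
    and g: "l2 g" and g_par: "\<And>n. \<not> parity_ok pl n \<Longrightarrow> g n = 0"
  obtains h where "l2 h" and "\<And>n. h n + sandwich m \<mu> V h n = g n"
    and "\<And>n. \<not> parity_ok pl n \<Longrightarrow> h n = 0"
proof -
  have "\<And>k. V k \<noteq> 0 \<Longrightarrow> even k" and Vw: "weighted_l2 m V"
    using V unfolding sobolev_neg_iff by blast+
  then have "\<exists>h. l2 h \<and> (\<forall>n. h n + sandwich m \<mu> V h n = g n) \<and> (\<forall>n. \<not> parity_ok pl n \<longrightarrow> h n = 0)"
    using g_par by (intro sandwich_eq_solvable[OF mu Vw S small g] sandwich_parity)
  then show ?thesis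
    using that by blast
qed

lemma sobolev_0_diff_cmult:
  assumes "f \<in> sobolev pl 0" and "l2 w" and "\<And>n. \<not> parity_ok pl n \<Longrightarrow> w n = 0"
  shows "(\<lambda>n. f n - c * w n) \<in> sobolev pl 0"
  unfolding sobolev_0_iff
proof (intro conjI allI impI l2_diff l2_cmult assms(2))
  show "l2 f"
    using assms(1) unfolding sobolev_0_iff by blast
  show "f n - c * w n \<noteq> 0 \<Longrightarrow> parity_ok pl n" for n
    using assms(1,3) unfolding sobolev_0_iff by (metis mult_zero_right diff_zero)
qed

lemma S_dom_shifted_solvable:
  fixes m :: nat and \<mu> :: real
  assumes mu: "\<mu> \<ge> 1" and S: "(\<lambda>n. 1 / rho m \<mu> n) summable_on UNIV"
    and V: "V \<in> sobolev True (- real m)" and small: "hs_sq m \<mu> V \<le> 1/4"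
    and f: "f \<in> sobolev pl 0"
  obtains w where "w \<in> S_dom pl m V" and "\<And>n. Dpow m w n + fmult V w n + of_real \<mu> * w n = f n"
proof -
  define r where "r n = complex_of_real (sqrt (rho m \<mu> n))" for n
  have r: "r n \<noteq> 0" for n
    unfolding r_def using rho_pos[OF mu, of m n] by simp
  have f_par: "\<And>n. \<not> parity_ok pl n \<Longrightarrow> f n = 0" and fl: "l2 f"
    using f unfolding sobolev_0_iff by blast+
  have "f n / r n = 0" if "\<not> parity_ok pl n" for n
    using f_par[OF that] by simp
  then obtain h where h: "l2 h" and h_eq: "\<And>n. h n + sandwich m \<mu> V h n = f n / r n"
    and h_par: "\<And>n. \<not> parity_ok pl n \<Longrightarrow> h n = 0"
    using sandwich_eq_solvable_parity[OF mu V S small l2_div_sqrt_rho[OF mu fl, where m=m, folded r_def]]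
    by blast
  define w where "w n = h n / r n" for n
  have rw_pointwise: "r n * w n = h n" for n
    using r by (simp add: w_def)
  then have rw: "(\<lambda>n. r n * w n) = h" ..
  have w_par: "\<not> parity_ok pl n \<Longrightarrow> w n = 0" for n
    using h_par by (simp add: w_def)
  have w_m: "w \<in> sobolev pl (real m)"
    unfolding sobolev_iff_l2_sqrt_rho[OF mu] rw[unfolded r_def] using h w_par by blast
  have eq: "Dpow m w n + fmult V w n + of_real \<mu> * w n = f n" for n
    using Dpow_fmult_eq_sandwich[OF mu, where m=m and u=w and n=n and V=V] h_eq[of n] r[of n]
      rw_pointwise[of n]
    unfolding rw[unfolded r_def] by (simp add: r_def)
  have "l2 w"
    using l2_div_sqrt_rho[OF mu h] unfolding w_def r_def .
  then have "(\<lambda>n. f n - of_real \<mu> * w n) \<in> sobolev pl 0"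
    by (rule sobolev_0_diff_cmult[OF f _ w_par])
  moreover have "(\<lambda>n. Dpow m w n + fmult V w n) = (\<lambda>n. f n - of_real \<mu> * w n)"
    using eq by (intro ext) (simp add: eq_diff_eq)
  ultimately have "(\<lambda>n. Dpow m w n + fmult V w n) \<in> sobolev pl 0"
    by simp
  then show ?thesis
    using that w_m eq unfolding S_dom_def by blast
qed

lemma l2sq_add_cmult_le:
  assumes "l2 a" and "l2 u"
  shows "l2sq (\<lambda>n. a n + of_real \<mu> * u n) \<le> 2 * (1 + \<mu>\<^sup>2) * (l2sq u + l2sq a)"
proof -
  have "l2sq (\<lambda>n. a n + of_real \<mu> * u n) \<le> 2 * l2sq a + 2 * (\<mu>\<^sup>2 * l2sq u)"
    using l2sq_add_le[OF assms(1) l2_cmult[OF assms(2)], of "of_real \<mu>"] by (simp add: l2sq_cmult)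
  also have "\<dots> \<le> 2 * (1 + \<mu>\<^sup>2) * (l2sq u + l2sq a)"
    using l2sq_nonneg[of a] l2sq_nonneg[of u] by (simp add: algebra_simps)
  finally show ?thesis .
qed

lemma l2sq_shifted_solutions_diff_le:
  fixes m :: nat and \<mu> :: real
  assumes mu: "\<mu> \<ge> 1" and S: "(\<lambda>n. 1 / rho m \<mu> n) summable_on UNIV"
    and V1: "V1 \<in> sobolev True (- real m)" and V2: "V2 \<in> sobolev True (- real m)"
    and small1: "hs_sq m \<mu> V1 \<le> 1/4" and small2: "hs_sq m \<mu> V2 \<le> 1/4"
    and u: "u \<in> S_dom pl m V1" and w: "w \<in> S_dom pl m V2"
    and eq: "\<And>n. Dpow m w n + fmult V2 w n + of_real \<mu> * w n = Dpow m u n + fmult V1 u n + of_real \<mu> * u n"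
  shows "l2sq (\<lambda>n. u n - w n)
    \<le> 16 * hs_sq m \<mu> (\<lambda>k. V2 k - V1 k) * l2sq (\<lambda>n. Dpow m u n + fmult V1 u n + of_real \<mu> * u n)"
proof -
  define r where "r n = complex_of_real (sqrt (rho m \<mu> n))" for n
  define f where "f n = Dpow m u n + fmult V1 u n + of_real \<mu> * u n" for n
  note u_facts = S_dom_sandwich_eq[OF mu u, folded r_def f_def]
  note w_facts = S_dom_sandwich_eq[OF mu w, folded r_def, unfolded eq, folded f_def]
  have fl: "l2 f" and Vw: "weighted_l2 m V1" "weighted_l2 m V2"
    using u_facts(3) V1 V2 unfolding sobolev_0_iff sobolev_neg_iff by blast+
  have "l2sq (\<lambda>n. u n - w n) \<le> l2sq (\<lambda>n. r n * u n - r n * w n) / \<mu>"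
    using l2sq_div_sqrt_rho_le[OF mu l2_diff[OF u_facts(1) w_facts(1)], where m=m]
    by (simp add: r_def right_diff_distrib[symmetric] rho_neq_0[OF mu])
  also have "\<dots> \<le> l2sq (\<lambda>n. r n * u n - r n * w n)"
    using mu by (intro divide_le_self l2sq_nonneg)
  also have "\<dots> \<le> 16 * hs_sq m \<mu> (\<lambda>k. V2 k - V1 k) * l2sq (\<lambda>n. f n / r n)"
    using l2sq_sandwich_solutions_diff_le[OF mu S Vw small1 small2 u_facts(1) w_facts(1)
        l2_div_sqrt_rho[OF mu fl, where m=m, folded r_def] u_facts(4) w_facts(4)] .
  also have "\<dots> \<le> 16 * hs_sq m \<mu> (\<lambda>k. V2 k - V1 k) * l2sq f"
    using l2sq_div_sqrt_rho_le[OF mu fl, where m=m] divide_le_self[OF l2sq_nonneg mu, of f]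
      hs_sq_nonneg[OF mu]
    unfolding r_def by (intro mult_left_mono) auto
  finally show ?thesis
    unfolding f_def .
qed

lemma dist_to_S_graph_le:
  fixes m :: nat and \<mu> :: real
  assumes mu: "\<mu> \<ge> 1" and S: "(\<lambda>n. 1 / rho m \<mu> n) summable_on UNIV"
    and V1: "V1 \<in> sobolev True (- real m)" and V2: "V2 \<in> sobolev True (- real m)"
    and small1: "hs_sq m \<mu> V1 \<le> 1/4" and small2: "hs_sq m \<mu> V2 \<le> 1/4"
    and x: "x \<in> S_graph pl m V1" and x1: "pnorm x = 1"
  shows "dist_to x (S_graph pl m V2) \<le> sqrt (32 * (1 + \<mu>\<^sup>2)\<^sup>2 * hs_sq m \<mu> (\<lambda>k. V2 k - V1 k))"
proof -
  obtain u where x_eq: "x = (u, \<lambda>n. Dpow m u n + fmult V1 u n)" and u: "u \<in> S_dom pl m V1"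
    using x unfolding S_graph_def by blast
  define f where "f n = Dpow m u n + fmult V1 u n + of_real \<mu> * u n" for n
  obtain w where w: "w \<in> S_dom pl m V2" and w_eq: "\<And>n. Dpow m w n + fmult V2 w n + of_real \<mu> * w n = f n"
    using S_dom_shifted_solvable[OF mu S V2 small2 S_dom_sandwich_eq(3)[OF mu u]] unfolding f_def by blast
  have Su: "l2 (\<lambda>n. Dpow m u n + fmult V1 u n)"
    using u unfolding S_dom_def sobolev_0_iff by blast
  have "l2sq u + l2sq (\<lambda>n. Dpow m u n + fmult V1 u n) = 1"
    using x1 unfolding x_eq pnorm_def by simp
  then have "l2sq f \<le> 2 * (1 + \<mu>\<^sup>2)"
    using l2sq_add_cmult_le[OF Su S_dom_sandwich_eq(2)[OF mu u], where \<mu>=\<mu>] unfolding f_def by simp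
  then have "16 * hs_sq m \<mu> (\<lambda>k. V2 k - V1 k) * l2sq f
      \<le> 16 * hs_sq m \<mu> (\<lambda>k. V2 k - V1 k) * (2 * (1 + \<mu>\<^sup>2))"
    using hs_sq_nonneg[OF mu] by (intro mult_left_mono) simp_all
  with l2sq_shifted_solutions_diff_le[OF mu S V1 V2 small1 small2 u w w_eq[unfolded f_def], folded f_def]
  have "(1 + \<mu>\<^sup>2) * l2sq (\<lambda>n. u n - w n)
      \<le> (1 + \<mu>\<^sup>2) * (16 * hs_sq m \<mu> (\<lambda>k. V2 k - V1 k) * (2 * (1 + \<mu>\<^sup>2)))"
    by (intro mult_left_mono) simp_all
  then have bound: "(1 + \<mu>\<^sup>2) * l2sq (\<lambda>n. u n - w n) \<le> 32 * (1 + \<mu>\<^sup>2)\<^sup>2 * hs_sq m \<mu> (\<lambda>k. V2 k - V1 k)"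
    by (simp add: power2_eq_square algebra_simps)
  have "(w, \<lambda>n. Dpow m w n + fmult V2 w n) \<in> S_graph pl m V2"
    using w unfolding S_graph_def by blast
  then have "dist_to x (S_graph pl m V2) \<le> sqrt ((1 + \<mu>\<^sup>2) * l2sq (\<lambda>n. u n - w n))"
    unfolding x_eq by (rule dist_to_le_of_shift) (simp add: w_eq f_def)
  also have "\<dots> \<le> sqrt (32 * (1 + \<mu>\<^sup>2)\<^sup>2 * hs_sq m \<mu> (\<lambda>k. V2 k - V1 k))"
    using bound by (rule real_sqrt_le_mono)
  finally show ?thesis .
qed

lemma gap_S_graph_le:
  fixes m :: nat and \<mu> :: real
  assumes mu: "\<mu> \<ge> 1" and S: "(\<lambda>n. 1 / rho m \<mu> n) summable_on UNIV"
    and V1: "V1 \<in> sobolev True (- real m)" and V2: "V2 \<in> sobolev True (- real m)"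
    and small1: "hs_sq m \<mu> V1 \<le> 1/4" and small2: "hs_sq m \<mu> V2 \<le> 1/4"
  shows "\<bar>gap (S_graph pl m V1) (S_graph pl m V2)\<bar>
    \<le> sqrt (32 * (1 + \<mu>\<^sup>2)\<^sup>2 * hs_sq m \<mu> (\<lambda>k. V1 k - V2 k))"
proof -
  let ?b = "sqrt (32 * (1 + \<mu>\<^sup>2)\<^sup>2 * hs_sq m \<mu> (\<lambda>k. V1 k - V2 k))"
  have b: "0 \<le> ?b"
    using hs_sq_nonneg[OF mu] by simp
  have d12: "dist_to x (S_graph pl m V2) \<le> ?b" if "x \<in> S_graph pl m V1" "pnorm x = 1" for x
    using dist_to_S_graph_le[OF mu S V1 V2 small1 small2 that] hs_sq_minus_commute[of m \<mu> V2 V1]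
    by simp
  have d21: "dist_to x (S_graph pl m V1) \<le> ?b" if "x \<in> S_graph pl m V2" "pnorm x = 1" for x
    using dist_to_S_graph_le[OF mu S V2 V1 small2 small1 that] .
  show ?thesis
    using gap_dir_le[where M="S_graph pl m V1" and N="S_graph pl m V2", OF d12 b]
      gap_dir_le[where M="S_graph pl m V2" and N="S_graph pl m V1", OF d21 b]
    unfolding gap_def by linarith
qed

text \<open>Local Lipschitz continuity of \<open>V \<mapsto> S\<^sub>\<plusminus>(V)\<close> in the gap metric: one shift \<open>\<mu>\<close> makes
  \<open>\<parallel>(D\<^sup>2\<^sup>m + \<mu>)\<^sup>-\<^sup>1\<^sup>/\<^sup>2 W (D\<^sup>2\<^sup>m + \<mu>)\<^sup>-\<^sup>1\<^sup>/\<^sup>2\<parallel>\<^sub>H\<^sub>S \<le> 1/2\<close> uniformly for all \<open>W\<close> in the unit ball around \<open>V\<close>.\<close>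
lemma gap_S_graph_le_sob_norm:
  assumes m: "m \<ge> 1" and V: "V \<in> sobolev True (- real m)"
  obtains C where "\<And>W. W \<in> sobolev True (- real m) \<Longrightarrow> sob_norm (- real m) (\<lambda>n. W n - V n) \<le> 1 \<Longrightarrow>
    \<bar>gap (S_graph pl m W) (S_graph pl m V)\<bar> \<le> C * sob_norm (- real m) (\<lambda>n. W n - V n)"
proof -
  have Vw: "weighted_l2 m V"
    using V unfolding sobolev_neg_iff by blast
  define c where "c = 1 / (8 * (weighted_l2sq m V + 1))"
  have c: "c > 0" and c_small: "c * (2 * weighted_l2sq m V + 2) = 1/4"
    using weighted_l2sq_nonneg[of m V] by (simp_all add: c_def field_simps)
  obtain \<mu> where mu: "\<mu> \<ge> 1" and S: "(\<lambda>n. 1 / rho m \<mu> n) summable_on UNIV"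
    and hs: "\<And>X. weighted_l2 m X \<Longrightarrow> hs_sq m \<mu> X \<le> c * weighted_l2sq m X"
    using hs_sq_small[OF m c] by blast
  have "\<bar>gap (S_graph pl m W) (S_graph pl m V)\<bar>
      \<le> sqrt (32 * (1 + \<mu>\<^sup>2)\<^sup>2 * c) * sob_norm (- real m) (\<lambda>n. W n - V n)"
    if W: "W \<in> sobolev True (- real m)" and close: "sob_norm (- real m) (\<lambda>n. W n - V n) \<le> 1" for W
  proof -
    have Ww: "weighted_l2 m W" and D: "weighted_l2 m (\<lambda>n. W n - V n)"
      using W Vw weighted_l2_diff unfolding sobolev_neg_iff by blast+
    have D_sq: "weighted_l2sq m (\<lambda>n. W n - V n) = (sob_norm (- real m) (\<lambda>n. W n - V n))\<^sup>2"
      unfolding sob_norm_neg using weighted_l2sq_nonneg by simp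
    then have "weighted_l2sq m (\<lambda>n. W n - V n) \<le> 1"
      using close unfolding sob_norm_neg by (simp add: power_le_one)
    then have "weighted_l2sq m W \<le> 2 * weighted_l2sq m V + 2"
      using weighted_l2sq_add_le[OF Vw D] by simp
    moreover have "weighted_l2sq m V \<le> 2 * weighted_l2sq m V + 2"
      using weighted_l2sq_nonneg[of m V] by simp
    ultimately have "c * weighted_l2sq m W \<le> 1/4" and "c * weighted_l2sq m V \<le> 1/4"
      using c by (simp_all add: c_small[symmetric] mult_left_mono)
    then have "\<bar>gap (S_graph pl m W) (S_graph pl m V)\<bar>
        \<le> sqrt (32 * (1 + \<mu>\<^sup>2)\<^sup>2 * hs_sq m \<mu> (\<lambda>k. W k - V k))"
      using hs[OF Ww] hs[OF Vw] by (intro gap_S_graph_le[OF mu S W V]) simp_all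
    also have "\<dots> \<le> sqrt (32 * (1 + \<mu>\<^sup>2)\<^sup>2 * (c * weighted_l2sq m (\<lambda>n. W n - V n)))"
      using hs[OF D] by (intro real_sqrt_le_mono mult_left_mono) simp_all
    finally have "\<bar>gap (S_graph pl m W) (S_graph pl m V)\<bar>
        \<le> sqrt (32 * (1 + \<mu>\<^sup>2)\<^sup>2 * (c * (sob_norm (- real m) (\<lambda>n. W n - V n))\<^sup>2))"
      unfolding D_sq .
    moreover have "sob_norm (- real m) (\<lambda>n. W n - V n) \<ge> 0"
      unfolding sob_norm_neg using weighted_l2sq_nonneg by simp
    ultimately show ?thesis
      using c by (simp add: real_sqrt_mult mult_ac)
  qed
  then show ?thesis
    by (rule that)
qed

theorem proposition3:
  fixes m :: nat and Vs :: "nat \<Rightarrow> int \<Rightarrow> complex" and V :: "int \<Rightarrow> complex"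
    and pl :: bool
  assumes "m \<ge> 1"
    and "\<And>k. Vs k \<in> sobolev True (- real m)"
    and "V \<in> sobolev True (- real m)"
    and "(\<lambda>k. sob_norm (- real m) (\<lambda>n. Vs k n - V n)) \<longlonglongrightarrow> 0"
  shows "(\<lambda>k. gap (S_graph pl m (Vs k)) (S_graph pl m V)) \<longlonglongrightarrow> 0"
proof -
  obtain C where C: "\<And>W. W \<in> sobolev True (- real m) \<Longrightarrow> sob_norm (- real m) (\<lambda>n. W n - V n) \<le> 1 \<Longrightarrow>
      \<bar>gap (S_graph pl m W) (S_graph pl m V)\<bar> \<le> C * sob_norm (- real m) (\<lambda>n. W n - V n)"
    using gap_S_graph_le_sob_norm[OF assms(1,3)] by blast
  have "\<forall>\<^sub>F k in sequentially. sob_norm (- real m) (\<lambda>n. Vs k n - V n) < 1"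
    using assms(4) by (rule order_tendstoD) simp
  then have "\<forall>\<^sub>F k in sequentially.
      norm (gap (S_graph pl m (Vs k)) (S_graph pl m V)) \<le> C * sob_norm (- real m) (\<lambda>n. Vs k n - V n)"
    by eventually_elim (simp add: C[OF assms(2)] less_imp_le)
  moreover have "(\<lambda>k. C * sob_norm (- real m) (\<lambda>n. Vs k n - V n)) \<longlonglongrightarrow> 0"
    using tendsto_mult_right_zero[OF assms(4)] .
  ultimately show ?thesis
    by (rule Lim_null_comparison)
qed

end
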